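(* Let $d:a\mapsto a'$ be a Hardy type series derivation on $\mathbb{K}$. Let $a\in\mathbb{K}^*$ with $a\not\asymp 1$. Then $$\mathrm{LT}\!\left(\frac{a'}{a}\right)=\mathrm{LE}(a)\,\mathrm{LT}\!\left(\frac{\mathrm{LF}(a)'}{\mathrm{LF}(a)}\right);$$ more precisely $\mathrm{LM}(a'/a)=\theta^{(\mathrm{LF}(a))}$ and $\mathrm{LC}(a'/a)=\mathrm{LE}(a)\,\mathrm{LC}\big(\mathrm{LF}(a)'/\mathrm{LF}(a)\big)$. In particular, $\hat\theta$ equals the greatest lower bound (with respect to $\preccurlyeq$) of $\Psi=\{\mathrm{LM}(b'/b): b\in\mathbb{K}^*,\ b\not\asymp 1\}$.
   Context: Let $(\Phi,\preccurlyeq)$ be a totally ordered set; $\mathbf{H}(\Phi)$ is the group of formal products $\gamma=\prod_{\phi}\phi^{\gamma_\phi}$, $\gamma_\phi\in\mathbb{R}$, with anti-well-ordered support $\operatorname{supp}\gamma=\{\phi:\gamma_\phi\neq0\}$, pointwise multiplication and anti-lexicographic order ($\gamma\succ1$ iff the exponent of $\max\operatorname{supp}\gamma$ is positive); $\Phi\subseteq\mathbf H(\Phi)$ via $\phi=\phi^1$. Fix a subgroup $\Gamma\supseteq\Phi$ of $\mathbf H(\Phi)$. For $1\ne\gamma$: $\mathrm{LF}(\gamma)=\max\operatorname{supp}\gamma$, $\mathrm{LE}(\gamma)=\gamma_{\mathrm{LF}(\gamma)}$. $\mathbb{K}=\mathbb{R}((\Gamma))$: formal series $\sum a_\alpha\alpha$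 with anti-well-ordered support $\operatorname{Supp}a\subseteq\Gamma$. For $a\ne0$: $\mathrm{LM}(a)=\max\operatorname{Supp}a$, $\mathrm{LC}(a)$ its coefficient, $\mathrm{LT}(a)=\mathrm{LC}(a)\mathrm{LM}(a)$, $\mathrm{LF}(a)=\mathrm{LF}(\mathrm{LM}(a))$, $\mathrm{LE}(a)=\mathrm{LE}(\mathrm{LM}(a))$. $a\preccurlyeq b$ iff $\mathrm{LM}(a)\preccurlyeq\mathrm{LM}(b)$; $a\asymp b$ iff $\mathrm{LM}(a)=\mathrm{LM}(b)$; $|a|=\max(\mathrm{LM}(a),\mathrm{LM}(a)^{-1})$; $a,b\succ1$ are comparable iff $\mathrm{LF}(a)=\mathrm{LF}(b)$. Summable families: union of supports anti-well-ordered, each monomial in finitely many supports; sums coefficientwise. A series derivation is a map $a\mapsto a'$ on $\mathbb{K}$ with $1'=0$, $\alpha'=\alpha\sum_{\phi\in\operatorname{supp}\alpha}\alpha_\phi\phi'/\phi$ for $\alpha=\prod\phi^{\alpha_\phi}\in\Gamma$, and $a'=\sum a_\alpha\alpha'$ (summable families). It is of Hardy type if: (HD1) its field of constants is $\mathbb{R}$; (HD2) for all $a,b\in\mathbb{K}^*$ with $a,b\not\asymp1$: $a\preccurlyeq b\iff a'\preccurlyeq b'$; (HD3) for all $a,b$ with $|a|\succ|b|\succ1$: $a'/a\succcurlyeq b'/b$, with $a'/a\asymp b'/b$ iff $a$ and $b$ are comparable. Notation: $\theta^{(\phi)}=\mathrm{LM}(\phi'/\phi)$ for $\phi\in\Phi$,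 $\Theta=\{\theta^{(\phi)}:\phi\in\Phi\}$, and $\hat\theta$ is the greatest lower bound of $\Theta$ in $(\Gamma,\preccurlyeq)$ when it exists. *)

theory Defs
  imports Complex_Main
begin

text \<open>Phi is modelled by a linearly ordered type 'p.  An element gamma of H(Phi)
  (written multiplicatively in the paper) is represented by its exponent function
  'p => real; the group operation is pointwise addition of exponents.\<close>

type_synonym 'p mon = "'p \<Rightarrow> real"
type_synonym 'p series = "'p mon \<Rightarrow> real"

definition gone :: "'p mon" where "gone = (\<lambda>_. 0)"
definition gmul :: "'p mon \<Rightarrow> 'p mon \<Rightarrow> 'p mon" where "gmul g h = (\<lambda>x. g x + h x)"
definition ginv :: "'p mon \<Rightarrow> 'p mon" where "ginv g = (\<lambda>x. - g x)"
definition gsupp :: "'p mon \<Rightarrow> 'p set" where "gsupp g = {x. g x \<noteq> 0}"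

text \<open>phi as the element phi^1 of H(Phi)\<close>
definition ind :: "'p \<Rightarrow> 'p mon" where "ind p = (\<lambda>x. if x = p then 1 else 0)"

definition anti_wo :: "'p::linorder set \<Rightarrow> bool" where
  "anti_wo S \<longleftrightarrow> wf {(x, y). x \<in> S \<and> y \<in> S \<and> y < x}"

definition Hgrp :: "('p::linorder) mon set" where
  "Hgrp = {g. anti_wo (gsupp g)}"

definition LFm :: "('p::linorder) mon \<Rightarrow> 'p" where
  "LFm g = (THE p. g p \<noteq> 0 \<and> (\<forall>q>p. g q = 0))"
definition LEm :: "('p::linorder) mon \<Rightarrow> real" where
  "LEm g = g (LFm g)"

definition gpos :: "('p::linorder) mon \<Rightarrow> bool" where
  "gpos g \<longleftrightarrow> (\<exists>p. g p > 0 \<and> (\<forall>q>p. g q = 0))"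
definition mless :: "('p::linorder) mon \<Rightarrow> 'p mon \<Rightarrow> bool" where
  "mless g h \<longleftrightarrow> gpos (gmul h (ginv g))"
definition mle :: "('p::linorder) mon \<Rightarrow> 'p mon \<Rightarrow> bool" where
  "mle g h \<longleftrightarrow> g = h \<or> mless g h"
definition mabs :: "('p::linorder) mon \<Rightarrow> 'p mon" where
  "mabs g = (if mless gone g then g else ginv g)"

definition good_group :: "('p::linorder) mon set \<Rightarrow> bool" where
  "good_group G \<longleftrightarrow> G \<subseteq> Hgrp \<and> gone \<in> G \<and> (\<forall>g\<in>G. \<forall>h\<in>G. gmul g h \<in> G)
     \<and> (\<forall>g\<in>G. ginv g \<in> G) \<and> (\<forall>p. ind p \<in> G)"

definition Supp :: "'p series \<Rightarrow> 'p mon set" where "Supp a = {g. a g \<noteq> 0}"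

definition anti_wo_m :: "('p::linorder) mon set \<Rightarrow> bool" where
  "anti_wo_m S \<longleftrightarrow> wf {(x, y). x \<in> S \<and> y \<in> S \<and> mless y x}"

definition is_series :: "('p::linorder) mon set \<Rightarrow> 'p series \<Rightarrow> bool" where
  "is_series G a \<longleftrightarrow> Supp a \<subseteq> G \<and> anti_wo_m (Supp a)"

definition szero :: "'p series" where "szero = (\<lambda>_. 0)"
definition mono :: "'p mon \<Rightarrow> 'p series" where "mono g = (\<lambda>h. if h = g then 1 else 0)"
definition smul :: "real \<Rightarrow> 'p series \<Rightarrow> 'p series" where "smul c a = (\<lambda>g. c * a g)"
definition stimes :: "'p series \<Rightarrow> 'p series \<Rightarrow> 'p series" where
  "stimes a b = (\<lambda>g. \<Sum>(x, y) \<in> {(x, y). a x \<noteq> 0 \<and> b y \<noteq> 0 \<and> gmul x y = g}. a x * b y)"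

definition sdiv :: "('p::linorder) mon set \<Rightarrow> 'p series \<Rightarrow> 'p series \<Rightarrow> 'p series" where
  "sdiv G b a = (THE c. is_series G c \<and> stimes c a = b)"

definition LM :: "('p::linorder) series \<Rightarrow> 'p mon" where
  "LM a = (THE g. g \<in> Supp a \<and> (\<forall>h\<in>Supp a. mle h g))"
definition LC :: "('p::linorder) series \<Rightarrow> real" where "LC a = a (LM a)"
definition LT :: "('p::linorder) series \<Rightarrow> 'p series" where "LT a = smul (LC a) (mono (LM a))"
definition LF :: "('p::linorder) series \<Rightarrow> 'p" where "LF a = LFm (LM a)"
definition LE :: "('p::linorder) series \<Rightarrow> real" where "LE a = LEm (LM a)"

definition fsummable :: "'i set \<Rightarrow> ('i \<Rightarrow> ('p::linorder) series) \<Rightarrow> bool" where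
  "fsummable I f \<longleftrightarrow> anti_wo_m (\<Union>i\<in>I. Supp (f i)) \<and> (\<forall>g. finite {i\<in>I. f i g \<noteq> 0})"
definition fsum :: "'i set \<Rightarrow> ('i \<Rightarrow> 'p series) \<Rightarrow> 'p series" where
  "fsum I f = (\<lambda>g. \<Sum>i\<in>{i\<in>I. f i g \<noteq> 0}. f i g)"

definition series_derivation :: "('p::linorder) mon set \<Rightarrow> ('p series \<Rightarrow> 'p series) \<Rightarrow> bool" where
  "series_derivation G D \<longleftrightarrow>
     (\<forall>a. is_series G a \<longrightarrow> is_series G (D a))
   \<and> D (mono gone) = szero
   \<and> (\<forall>al\<in>G. let f = (\<lambda>p. smul (al p) (sdiv G (D (mono (ind p))) (mono (ind p)))) in
        fsummable (gsupp al) f \<and> D (mono al) = stimes (mono al) (fsum (gsupp al) f))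
   \<and> (\<forall>a. is_series G a \<longrightarrow>
        (let f = (\<lambda>al. smul (a al) (D (mono al))) in
          fsummable (Supp a) f \<and> D a = fsum (Supp a) f))"

definition hardy_type :: "('p::linorder) mon set \<Rightarrow> ('p series \<Rightarrow> 'p series) \<Rightarrow> bool" where
  "hardy_type G D \<longleftrightarrow> series_derivation G D
   \<and> (\<forall>a. is_series G a \<longrightarrow> (D a = szero \<longleftrightarrow> (\<exists>c. a = smul c (mono gone))))
   \<and> (\<forall>a b. is_series G a \<and> is_series G b \<and> a \<noteq> szero \<and> b \<noteq> szero
        \<and> LM a \<noteq> gone \<and> LM b \<noteq> gone \<longrightarrow> (mle (LM a) (LM b) \<longleftrightarrow> mle (LM (D a)) (LM (D b))))
   \<and> (\<forall>a b. is_series G a \<and> is_series G b \<and> a \<noteq> szero \<and> b \<noteq> szero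
        \<and> mless (mabs (LM b)) (mabs (LM a)) \<and> mless gone (mabs (LM b)) \<longrightarrow>
          mle (LM (sdiv G (D b) b)) (LM (sdiv G (D a) a))
          \<and> (LM (sdiv G (D a) a) = LM (sdiv G (D b) b) \<longleftrightarrow> LF a = LF b))"

definition theta :: "('p::linorder) mon set \<Rightarrow> ('p series \<Rightarrow> 'p series) \<Rightarrow> 'p \<Rightarrow> 'p mon" where
  "theta G D p = LM (sdiv G (D (mono (ind p))) (mono (ind p)))"

definition is_glb :: "('p::linorder) mon set \<Rightarrow> 'p mon set \<Rightarrow> 'p mon \<Rightarrow> bool" where
  "is_glb G S g \<longleftrightarrow> g \<in> G \<and> (\<forall>s\<in>S. mle g s) \<and> (\<forall>h\<in>G. (\<forall>s\<in>S. mle h s) \<longrightarrow> mle h g)"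

end

theory Submission
  imports Defs
begin

text \<open>Write \<open>\<alpha> = LM(a)\<close>, \<open>\<phi> = LF(a)\<close>, \<open>\<theta> = \<theta>(\<phi>)\<close>. By (HD3) the map \<open>\<psi> \<mapsto> \<theta>(\<psi>)\<close> is
  strictly increasing, and comparing \<open>a\<close> and \<open>\<phi>\<close> with a large power \<open>\<phi>\<^sup>n\<close> gives
  \<open>LM(a'/a) = \<theta>\<close>. Since \<open>\<alpha>' = \<alpha> \<Sum>\<^sub>\<psi> \<alpha>\<^sub>\<psi> \<psi>'/\<psi>\<close>, monotonicity of \<open>\<theta>\<close> shows that
  only \<open>\<psi> = \<phi>\<close> contributes to the leading term \<open>LE(a) LC(\<phi>'/\<phi>) \<alpha>\<theta>\<close> of \<open>\<alpha>'\<close>, and by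
  (HD2) the other monomials of \<open>a\<close> have derivatives strictly below \<open>\<alpha>\<theta>\<close>. Comparing
  coefficients of \<open>a' = (a'/a) a\<close> at \<open>\<alpha>\<theta>\<close> gives the leading coefficient. The quotient
  \<open>a'/a\<close> exists because \<open>\<real>((\<Gamma>))\<close> is a field, which rests on Neumann's lemma.\<close>

section \<open>Anti-well-ordered subsets of a linear order\<close>

lemma anti_wo_iff_no_increasing_seq:
  "anti_wo S \<longleftrightarrow> (\<nexists>f. (\<forall>i. f i \<in> S) \<and> (\<forall>i. f i < f (Suc i)))"
  unfolding anti_wo_def wf_iff_no_infinite_down_chain by auto

lemma anti_wo_subset: "anti_wo T \<Longrightarrow> S \<subseteq> T \<Longrightarrow> anti_wo S"
  unfolding anti_wo_iff_no_increasing_seq by blast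

lemma anti_wo_singleton: "anti_wo {x}"
  unfolding anti_wo_iff_no_increasing_seq by auto

lemma anti_wo_has_max:
  assumes "anti_wo S" "X \<subseteq> S" "X \<noteq> {}"
  shows "\<exists>m\<in>X. \<forall>x\<in>X. x \<le> m"
proof -
  let ?R = "{(x, y). x \<in> X \<and> y \<in> X \<and> y < x}"
  have "wf ?R" using anti_wo_subset[OF assms(1,2)] unfolding anti_wo_def .
  then obtain m where m: "m \<in> X" "\<And>y. (y, m) \<in> ?R \<Longrightarrow> y \<notin> X"
    using wfE_min'[OF _ assms(3)] by blast
  have "x \<le> m" if "x \<in> X" for x
  proof (rule ccontr)
    assume "\<not> x \<le> m"
    then have "(x, m) \<in> ?R" using m(1) that by simp
    then have "x \<notin> X" by (rule m(2))
    with that show False by contradiction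
  qed
  with m(1) show ?thesis by blast
qed

lemma anti_wo_iff_has_max:
  "anti_wo S \<longleftrightarrow> (\<forall>X \<subseteq> S. X \<noteq> {} \<longrightarrow> (\<exists>m\<in>X. \<forall>x\<in>X. x \<le> m))"
proof (intro iffI allI impI)
  fix X assume "anti_wo S" "X \<subseteq> S" "X \<noteq> {}"
  then show "\<exists>m\<in>X. \<forall>x\<in>X. x \<le> m" by (rule anti_wo_has_max)
next
  assume max: "\<forall>X \<subseteq> S. X \<noteq> {} \<longrightarrow> (\<exists>m\<in>X. \<forall>x\<in>X. x \<le> m)"
  show "anti_wo S" unfolding anti_wo_iff_no_increasing_seq
  proof
    assume "\<exists>f. (\<forall>i. f i \<in> S) \<and> (\<forall>i. f i < f (Suc i))"
    then obtain f where f: "range f \<subseteq> S" "\<And>i. f i < f (Suc i)" by blast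
    have "\<exists>i. \<forall>x\<in>range f. x \<le> f i" using max f(1) by blast
    then obtain i where "\<forall>x\<in>range f. x \<le> f i" ..
    then have "f (Suc i) \<le> f i" by blast
    with f(2)[of i] show False by simp
  qed
qed

lemma anti_wo_Un:
  assumes S: "anti_wo S" and T: "anti_wo T"
  shows "anti_wo (S \<union> T)"
  unfolding anti_wo_iff_has_max
proof (intro allI impI)
  fix X assume X: "X \<subseteq> S \<union> T" "X \<noteq> {}"
  have max_part: "\<exists>m\<in>X \<inter> A. \<forall>x\<in>X \<inter> A. x \<le> m" if "anti_wo A" "X \<inter> A \<noteq> {}" for A
    using that by (simp add: anti_wo_has_max)
  consider "X \<subseteq> T" | "X \<subseteq> S" | "X \<inter> S \<noteq> {}" "X \<inter> T \<noteq> {}" using X(1) by blast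
  then show "\<exists>m\<in>X. \<forall>x\<in>X. x \<le> m"
  proof cases
    case 1 then show ?thesis using max_part[OF T] X(2) by (simp add: Int_absorb2)
  next
    case 2 then show ?thesis using max_part[OF S] X(2) by (simp add: Int_absorb2)
  next
    case 3
    then obtain mS mT where m: "mS \<in> X" "\<forall>x\<in>X \<inter> S. x \<le> mS" "mT \<in> X" "\<forall>x\<in>X \<inter> T. x \<le> mT"
      using max_part[OF S] max_part[OF T] by blast
    then have "\<forall>x\<in>X. x \<le> max mS mT" using X(1) by (auto simp: le_max_iff_disj)
    moreover have "max mS mT \<in> X" using m by (simp add: max_def)
    ultimately show ?thesis by blast
  qed
qed

lemma anti_wo_nonincreasing_subseq:
  fixes f :: "nat \<Rightarrow> 'a::linorder"
  assumes "anti_wo S" "\<And>i. f i \<in> S"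
  obtains r where "strict_mono r" "\<And>n. f (r (Suc n)) \<le> f (r n)"
proof -
  have "\<exists>n>N. \<forall>m>N. f m \<le> f n" for N
    using anti_wo_has_max[OF assms(1), of "f ` {N<..}"] assms(2) by (fastforce simp: Suc_le_eq)
  then obtain nx where nx: "\<And>N. nx N > N" "\<And>N m. m > N \<Longrightarrow> f m \<le> f (nx N)" by metis
  define r where "r k = (nx ^^ Suc k) 0" for k
  have r_Suc: "r (Suc k) = nx (r k)" for k unfolding r_def by simp
  show thesis
  proof
    show "strict_mono r" unfolding strict_mono_Suc_iff using r_Suc nx(1) by simp
    show "f (r (Suc n)) \<le> f (r n)" for n
    proof -
      let ?p = "(nx ^^ n) 0"
      have "r n = nx ?p" unfolding r_def by simp
      then have "?p < r (Suc n)" using nx(1)[of ?p] nx(1)[of "r n"] r_Suc[of n] by simp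
      then show ?thesis using nx(2) \<open>r n = nx ?p\<close> by simp
    qed
  qed
qed

lemma anti_wo_translate:
  fixes S :: "'g::linordered_ab_group_add set"
  shows "anti_wo S \<Longrightarrow> anti_wo ((\<lambda>x. x - c) ` S)"
  unfolding anti_wo_iff_no_increasing_seq
proof (elim contrapos_nn exE)
  fix f assume f: "(\<forall>i. f i \<in> (\<lambda>x. x - c) ` S) \<and> (\<forall>i. f i < f (Suc i))"
  have "f i + c \<in> S" for i
  proof -
    obtain x where "x \<in> S" "f i = x - c" using f by blast
    then show ?thesis by simp
  qed
  with f show "\<exists>f. (\<forall>i. f i \<in> S) \<and> (\<forall>i. f i < f (Suc i))"
    by (intro exI[of _ "\<lambda>i. f i + c"]) simp
qed

lemma anti_wo_sumset:
  fixes S T :: "'g::linordered_ab_group_add set"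
  assumes S: "anti_wo S" and T: "anti_wo T"
  shows "anti_wo {s + t | s t. s \<in> S \<and> t \<in> T}"
  unfolding anti_wo_iff_no_increasing_seq
proof
  assume "\<exists>f. (\<forall>i. f i \<in> {s + t |s t. s \<in> S \<and> t \<in> T}) \<and> (\<forall>i. f i < f (Suc i))"
  then obtain f where f: "\<forall>i. \<exists>s t. f i = s + t \<and> s \<in> S \<and> t \<in> T" "\<forall>i. f i < f (Suc i)"
    by blast
  from f(1) obtain s t where st: "\<forall>i. f i = s i + t i \<and> s i \<in> S \<and> t i \<in> T"
    by metis
  with f(2) have inc: "s i + t i < s (Suc i) + t (Suc i)" for i by metis
  obtain r where r: "strict_mono r" "\<And>n. s (r (Suc n)) \<le> s (r n)"
    using anti_wo_nonincreasing_subseq[OF S, of s] st by blast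
  have "strict_mono (\<lambda>i. s i + t i)" using inc strict_mono_Suc_iff by blast
  then have "s (r n) + t (r n) < s (r (Suc n)) + t (r (Suc n))" for n
    using r(1) by (simp add: strict_mono_def)
  \<comment> \<open>along \<open>r\<close> the \<open>S\<close>-parts do not increase, so the \<open>T\<close>-parts must\<close>
  then have "t (r n) < t (r (Suc n))" for n using r(2)[of n] by (metis add_mono not_le)
  with st have "\<exists>f. (\<forall>i. f i \<in> T) \<and> (\<forall>i. f i < f (Suc i))"
    by (intro exI[of _ "\<lambda>n. t (r n)"]) simp
  with T show False by (simp add: anti_wo_iff_no_increasing_seq)
qed

lemma anti_wo_finite_fibres:
  fixes S T :: "'g::linordered_ab_group_add set"
  assumes S: "anti_wo S" and T: "anti_wo T"
  shows "finite {s \<in> S. g - s \<in> T}"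
proof (rule ccontr)
  assume "infinite {s \<in> S. g - s \<in> T}"
  then obtain e :: "nat \<Rightarrow> 'g" where e: "inj e" "range e \<subseteq> {s \<in> S. g - s \<in> T}"
    using infinite_countable_subset by blast
  obtain r where r: "strict_mono r" "\<And>n. e (r (Suc n)) \<le> e (r n)"
    using anti_wo_nonincreasing_subseq[OF S, of e] e(2) by blast
  have "e (r (Suc n)) \<noteq> e (r n)" for n
    using e(1) r(1) by (metis inj_eq lessI less_irrefl strict_mono_def)
  then have "e (r (Suc n)) < e (r n)" for n using r(2)[of n] by (simp add: order_less_le)
  then have "g - e (r n) < g - e (r (Suc n))" for n by simp
  moreover have "g - e (r n) \<in> T" for n using e(2) by blast
  ultimately have "\<exists>f. (\<forall>i. f i \<in> T) \<and> (\<forall>i. f i < f (Suc i))"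
    by (intro exI[of _ "\<lambda>n. g - e (r n)"]) simp
  with T show False by (simp add: anti_wo_iff_no_increasing_seq)
qed

section \<open>Neumann's lemma\<close>

definition increasing_in :: "'a::order set \<Rightarrow> (nat \<Rightarrow> 'a) \<Rightarrow> bool" where
  "increasing_in S f \<longleftrightarrow> (\<forall>i. f i \<in> S) \<and> (\<forall>i. f i < f (Suc i))"

lemma anti_wo_iff_no_increasing_in: "anti_wo S \<longleftrightarrow> (\<nexists>f. increasing_in S f)"
  unfolding anti_wo_iff_no_increasing_seq increasing_in_def ..

text \<open>Nash-Williams' minimal bad sequence: at every position choose an element of least
  measure among those that still extend the chosen prefix to an increasing sequence.\<close>
lemma minimal_increasing_seq:
  fixes \<mu> :: "'a::order \<Rightarrow> nat"
  assumes "\<exists>f. increasing_in S f"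
  obtains g where "increasing_in S g"
    "\<And>h n. increasing_in S h \<Longrightarrow> (\<forall>i<n. h i = g i) \<Longrightarrow> \<mu> (g n) \<le> \<mu> (h n)"
proof -
  define extends where "extends xs \<longleftrightarrow> (\<exists>f. increasing_in S f \<and> (\<forall>i<length xs. f i = xs ! i))"
    for xs
  define nxt where "nxt xs = (ARG_MIN \<mu> x. extends (xs @ [x]))" for xs
  define pre where "pre n = ((\<lambda>xs. xs @ [nxt xs]) ^^ n) []" for n
  have pre_Suc: "pre (Suc n) = pre n @ [nxt (pre n)]" for n unfolding pre_def by simp
  have length_pre: "length (pre n) = n" for n by (induction n) (simp_all add: pre_def)
  have nth_pre: "pre n ! i = nxt (pre i)" if "i < n" for i n
    using that by (induction n) (auto simp: pre_Suc nth_append length_pre less_Suc_eq)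
  have extends_nxt: "extends (xs @ [nxt xs]) \<and> (\<forall>y. extends (xs @ [y]) \<longrightarrow> \<mu> (nxt xs) \<le> \<mu> y)"
    if xs: "extends xs" for xs
  proof -
    obtain f where f: "increasing_in S f" "\<forall>i<length xs. f i = xs ! i"
      using xs unfolding extends_def by blast
    then have "extends (xs @ [f (length xs)])"
      unfolding extends_def by (intro exI[of _ f]) (auto simp: nth_append less_Suc_eq)
    then show ?thesis unfolding nxt_def by (rule arg_min_nat_lemma)
  qed
  have extends_pre: "extends (pre n)" for n
  proof (induction n)
    case 0 show ?case using assms unfolding extends_def pre_def by simp
  next
    case (Suc n) then show ?case using extends_nxt by (simp add: pre_Suc)
  qed
  define g where "g i = nxt (pre i)" for i
  show thesis
  proof
    show "increasing_in S g" unfolding increasing_in_def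
    proof (intro conjI allI)
      fix i
      obtain f where f: "increasing_in S f" "\<forall>j<Suc (Suc i). f j = pre (Suc (Suc i)) ! j"
        using extends_pre[of "Suc (Suc i)"] unfolding extends_def length_pre by blast
      then have "f i = g i" "f (Suc i) = g (Suc i)" by (simp_all add: nth_pre g_def)
      with f(1) show "g i \<in> S" "g i < g (Suc i)" unfolding increasing_in_def by metis+
    qed
  next
    fix h n assume h: "increasing_in S h" "\<forall>i<n. h i = g i"
    then have "extends (pre n @ [h n])" unfolding extends_def
      by (intro exI[of _ h]) (auto simp: nth_append length_pre nth_pre g_def less_Suc_eq)
    then show "\<mu> (g n) \<le> \<mu> (h n)" using extends_nxt[OF extends_pre] g_def by simp
  qed
qed

inductive sum_of :: "'g::monoid_add set \<Rightarrow> nat \<Rightarrow> 'g \<Rightarrow> bool" for P where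
  sum_of_0: "sum_of P 0 0"
| sum_of_Suc: "sum_of P n x \<Longrightarrow> p \<in> P \<Longrightarrow> sum_of P (Suc n) (p + x)"

definition generated_monoid :: "'g::monoid_add set \<Rightarrow> 'g set" where
  "generated_monoid P = {x. \<exists>n. sum_of P n x}"

definition sum_length :: "'g::monoid_add set \<Rightarrow> 'g \<Rightarrow> nat" where
  "sum_length P x = (LEAST n. sum_of P n x)"

lemma zero_in_generated_monoid: "0 \<in> generated_monoid P"
  unfolding generated_monoid_def using sum_of_0 by blast

lemma generated_monoid_add: "x \<in> generated_monoid P \<Longrightarrow> p \<in> P \<Longrightarrow> p + x \<in> generated_monoid P"
  unfolding generated_monoid_def using sum_of_Suc by blast

lemma generated_monoid_subset:
  assumes "0 \<in> H" "\<forall>x\<in>H. \<forall>y\<in>H. x + y \<in> H" "P \<subseteq> H"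
  shows "generated_monoid P \<subseteq> H"
proof -
  have "sum_of P n x \<Longrightarrow> x \<in> H" for n x
    by (induction rule: sum_of.induct) (use assms in auto)
  then show ?thesis unfolding generated_monoid_def by blast
qed

lemma generated_monoid_nonpos:
  fixes P :: "'g::ordered_comm_monoid_add set"
  assumes "x \<in> generated_monoid P" "\<forall>p\<in>P. p < 0"
  shows "x \<le> 0"
proof -
  have "sum_of P n x \<Longrightarrow> x \<le> 0" for n x
    by (induction rule: sum_of.induct) (use assms(2) in \<open>auto intro: add_nonpos_nonpos less_imp_le\<close>)
  then show ?thesis using assms(1) unfolding generated_monoid_def by blast
qed

lemma sum_of_sum_length: "x \<in> generated_monoid P \<Longrightarrow> sum_of P (sum_length P x) x"
  unfolding generated_monoid_def sum_length_def by (rule LeastI_ex) simp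

lemma sum_length_le: "sum_of P n x \<Longrightarrow> sum_length P x \<le> n"
  unfolding sum_length_def by (rule Least_le)

lemma generated_monoid_split:
  assumes "x \<in> generated_monoid P" "x \<noteq> 0"
  obtains p y where "p \<in> P" "sum_of P (sum_length P x - 1) y" "x = p + y"
    "sum_length P x \<noteq> 0"
  using sum_of_sum_length[OF assms(1)]
proof (cases rule: sum_of.cases)
  case sum_of_0
  with assms(2) show thesis by simp
next
  case (sum_of_Suc n y p)
  then show thesis using that[of p y] by simp
qed

lemma increasing_in_splice:
  fixes g p y :: "nat \<Rightarrow> 'g::linordered_ab_group_add"
  assumes g: "increasing_in S g" and y: "\<And>n. y n \<in> S" and p: "\<And>n. p n < 0"
    and split: "\<And>n. g n = p n + y n"
    and r: "strict_mono r" "\<And>n. p (r (Suc n)) \<le> p (r n)"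
  shows "increasing_in S (\<lambda>i. if i < r 0 then g i else y (r (i - r 0)))"
  unfolding increasing_in_def
proof (intro conjI allI)
  let ?h = "\<lambda>i. if i < r 0 then g i else y (r (i - r 0))"
  have g_mono: "strict_mono g" using g unfolding increasing_in_def strict_mono_Suc_iff by blast
  fix i
  show "?h i \<in> S" using g y unfolding increasing_in_def by simp
  consider "Suc i < r 0" | "Suc i = r 0" | "r 0 \<le> i" by linarith
  then show "?h i < ?h (Suc i)"
  proof cases
    case 1
    then show ?thesis using g unfolding increasing_in_def by simp
  next
    case 2
    have "g i < g (r 0)" using g_mono 2 by (simp add: strict_mono_less)
    also have "g (r 0) < y (r 0)" using split[of "r 0"] p[of "r 0"] by simp
    finally show ?thesis using 2 by simp
  next
    case 3
    define k where "k = i - r 0"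
    have "g (r k) < g (r (Suc k))" using g_mono r(1) by (simp add: strict_mono_less)
    then have "y (r k) < y (r (Suc k))" using r(2)[of k] split by (metis add_mono not_le)
    moreover have "Suc i - r 0 = Suc k" using 3 k_def by simp
    ultimately show ?thesis using 3 unfolding k_def by simp
  qed
qed

text \<open>A minimal increasing sequence \<open>g\<close> in the monoid is shortened by
  removing one summand from each \<open>g n\<close>; along a subsequence on which the removed summands
  do not increase, the remainders are still increasing, contradicting minimality.\<close>
theorem anti_wo_generated_monoid:
  fixes P :: "'g::linordered_ab_group_add set"
  assumes P: "anti_wo P" "\<forall>p\<in>P. p < 0"
  shows "anti_wo (generated_monoid P)"
proof (rule ccontr)
  let ?M = "generated_monoid P"
  assume "\<not> anti_wo ?M"
  then obtain g where g: "increasing_in ?M g" and g_min: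
    "\<And>h n. increasing_in ?M h \<Longrightarrow> (\<forall>i<n. h i = g i) \<Longrightarrow> sum_length P (g n) \<le> sum_length P (h n)"
    using minimal_increasing_seq unfolding anti_wo_iff_no_increasing_in by blast
  have "\<exists>p y. p \<in> P \<and> sum_of P (sum_length P (g n) - 1) y \<and> g n = p + y
      \<and> sum_length P (g n) \<noteq> 0" for n
  proof -
    have "g n < g (Suc n)" "g (Suc n) \<le> 0" "g n \<in> ?M"
      using g generated_monoid_nonpos[OF _ P(2)] unfolding increasing_in_def by auto
    then show ?thesis using generated_monoid_split[of "g n"] by (metis not_less)
  qed
  then obtain p y where "\<And>n. p n \<in> P \<and> sum_of P (sum_length P (g n) - 1) (y n) \<and> g n = p n + y n
      \<and> sum_length P (g n) \<noteq> 0"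
    by metis
  then have py: "\<And>n. p n \<in> P" "\<And>n. sum_of P (sum_length P (g n) - 1) (y n)"
    "\<And>n. g n = p n + y n" "\<And>n. sum_length P (g n) \<noteq> 0"
    by blast+
  obtain r where r: "strict_mono r" "\<And>n. p (r (Suc n)) \<le> p (r n)"
    using anti_wo_nonincreasing_subseq[OF P(1), of p] py(1) by blast
  define h where "h i = (if i < r 0 then g i else y (r (i - r 0)))" for i
  have "increasing_in ?M h"
    unfolding h_def using P(2) py(1,2,3) generated_monoid_def
    by (intro increasing_in_splice[OF g _ _ _ r]) blast+
  moreover have "sum_length P (h (r 0)) < sum_length P (g (r 0))"
    using sum_length_le[OF py(2)[of "r 0"]] py(4)[of "r 0"] unfolding h_def by simp
  moreover have "\<forall>i<r 0. h i = g i" unfolding h_def by simp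
  ultimately show False using g_min[of h "r 0"] by simp
qed

section \<open>Hahn series over an ordered abelian group\<close>

definition supp :: "('g \<Rightarrow> real) \<Rightarrow> 'g set" where
  "supp a = {g. a g \<noteq> 0}"

definition convolution :: "('g::ab_group_add \<Rightarrow> real) \<Rightarrow> ('g \<Rightarrow> real) \<Rightarrow> 'g \<Rightarrow> real" where
  "convolution c a g = (\<Sum>(x, y)\<in>{(x, y). c x \<noteq> 0 \<and> a y \<noteq> 0 \<and> x + y = g}. c x * a y)"

lemma convolution_eq_sum_fibre:
  "convolution c a g = (\<Sum>y\<in>{y\<in>supp a. g - y \<in> supp c}. c (g - y) * a y)"
proof -
  have "{(x, y). c x \<noteq> 0 \<and> a y \<noteq> 0 \<and> x + y = g} = (\<lambda>y. (g - y, y)) ` {y\<in>supp a. g - y \<in> supp c}"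
    unfolding supp_def by (auto simp: algebra_simps image_iff)
  moreover have "inj_on (\<lambda>y. (g - y, y)) {y\<in>supp a. g - y \<in> supp c}" by (auto simp: inj_on_def)
  ultimately show ?thesis unfolding convolution_def by (simp add: sum.reindex comp_def)
qed

lemma convolution_eq_sum_superset:
  assumes "finite Y" "{y\<in>supp a. g - y \<in> supp c} \<subseteq> Y"
  shows "convolution c a g = (\<Sum>y\<in>Y. c (g - y) * a y)"
  unfolding convolution_eq_sum_fibre
  by (rule sum.mono_neutral_left[OF assms]) (auto simp: supp_def)

lemma convolution_diff_left:
  fixes a c1 c2 :: "'g::linordered_ab_group_add \<Rightarrow> real"
  assumes "anti_wo (supp a)" "anti_wo (supp c1)" "anti_wo (supp c2)"
  shows "convolution (\<lambda>x. c1 x - c2 x) a g = convolution c1 a g - convolution c2 a g"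
proof -
  let ?Y = "{y\<in>supp a. g - y \<in> supp c1} \<union> {y\<in>supp a. g - y \<in> supp c2}"
  have Y: "finite ?Y" using anti_wo_finite_fibres assms by blast
  have "convolution (\<lambda>x. c1 x - c2 x) a g = (\<Sum>y\<in>?Y. (c1 (g - y) - c2 (g - y)) * a y)"
    by (rule convolution_eq_sum_superset[OF Y]) (auto simp: supp_def)
  moreover have "convolution c1 a g = (\<Sum>y\<in>?Y. c1 (g - y) * a y)"
    by (rule convolution_eq_sum_superset[OF Y]) auto
  moreover have "convolution c2 a g = (\<Sum>y\<in>?Y. c2 (g - y) * a y)"
    by (rule convolution_eq_sum_superset[OF Y]) auto
  ultimately show ?thesis by (simp add: left_diff_distrib sum_subtractf)
qed

lemma convolution_leading:
  fixes a c :: "'g::linordered_ab_group_add \<Rightarrow> real"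
  assumes "\<gamma> \<in> supp c" "\<forall>x\<in>supp c. x \<le> \<gamma>" "\<alpha> \<in> supp a" "\<forall>y\<in>supp a. y \<le> \<alpha>"
  shows "convolution c a (\<gamma> + \<alpha>) = c \<gamma> * a \<alpha>"
proof -
  have "{y\<in>supp a. \<gamma> + \<alpha> - y \<in> supp c} = {\<alpha>}"
  proof (intro equalityI subsetI)
    fix y assume "y \<in> {y\<in>supp a. \<gamma> + \<alpha> - y \<in> supp c}"
    then have "y \<le> \<alpha>" "\<gamma> + \<alpha> - y \<le> \<gamma>" using assms by auto
    then show "y \<in> {\<alpha>}" by (simp add: algebra_simps)
  qed (use assms in simp)
  then show ?thesis unfolding convolution_eq_sum_fibre by simp
qed

lemma convolution_cancel_right:
  fixes a c1 c2 :: "'g::linordered_ab_group_add \<Rightarrow> real"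
  assumes "anti_wo (supp a)" "supp a \<noteq> {}" "anti_wo (supp c1)" "anti_wo (supp c2)"
    and "convolution c1 a = convolution c2 a"
  shows "c1 = c2"
proof (rule ccontr)
  assume ne: "c1 \<noteq> c2"
  let ?d = "\<lambda>x. c1 x - c2 x"
  have "supp ?d \<subseteq> supp c1 \<union> supp c2" unfolding supp_def by auto
  then have "anti_wo (supp ?d)" using anti_wo_subset anti_wo_Un assms(3,4) by blast
  moreover have "supp ?d \<noteq> {}" using ne unfolding supp_def by (auto simp: fun_eq_iff)
  ultimately obtain \<gamma> where g: "\<gamma> \<in> supp ?d" "\<forall>x\<in>supp ?d. x \<le> \<gamma>" using anti_wo_has_max by blast
  obtain \<alpha> where al: "\<alpha> \<in> supp a" "\<forall>x\<in>supp a. x \<le> \<alpha>" using anti_wo_has_max assms(1,2) by blast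
  have "convolution ?d a (\<gamma> + \<alpha>) = ?d \<gamma> * a \<alpha>" by (rule convolution_leading[OF g al])
  moreover have "?d \<gamma> * a \<alpha> \<noteq> 0" using g(1) al(1) unfolding supp_def by simp
  moreover have "convolution ?d a (\<gamma> + \<alpha>) = 0" using convolution_diff_left[OF assms(1,3,4)] assms(5) by simp
  ultimately show False by simp
qed

lemma anti_wo_recursion:
  fixes F :: "('a::linorder \<Rightarrow> 'b::zero) \<Rightarrow> 'a \<Rightarrow> 'b"
  assumes "anti_wo M"
    and "\<And>c c' h. h \<in> M \<Longrightarrow> (\<forall>x\<in>M. h < x \<longrightarrow> c x = c' x) \<Longrightarrow> F c h = F c' h"
  obtains c where "\<And>h. c h = (if h \<in> M then F c h else 0)"
proof -
  let ?R = "{(x, y). x \<in> M \<and> y \<in> M \<and> y < x}"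
  let ?F = "\<lambda>c h. if h \<in> M then F c h else 0"
  have "adm_wf ?R ?F" unfolding adm_wf_def
  proof (intro allI impI)
    fix c c' :: "'a \<Rightarrow> 'b" and h assume "\<forall>x. (x, h) \<in> ?R \<longrightarrow> c x = c' x"
    then show "?F c h = ?F c' h" using assms(2)[of h c c'] by simp
  qed
  with assms(1) have "wfrec ?R ?F = ?F (wfrec ?R ?F)"
    unfolding anti_wo_def by (rule wfrec_fixpoint)
  then show thesis by (intro that) (rule fun_cong)
qed

lemma convolution_split_leading:
  fixes a c :: "'g::linordered_ab_group_add \<Rightarrow> real"
  assumes a: "anti_wo (supp a)" "\<alpha> \<in> supp a" "\<forall>y\<in>supp a. y \<le> \<alpha>"
    and M: "anti_wo M" "supp c \<subseteq> M"
    and P: "P = (\<lambda>y. y - \<alpha>) ` (supp a - {\<alpha>})"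
  shows "convolution c a g
    = c (g - \<alpha>) * a \<alpha> + (\<Sum>q\<in>{q\<in>P. g - \<alpha> - q \<in> M}. a (\<alpha> + q) * c (g - \<alpha> - q))"
proof -
  let ?Q = "{q\<in>P. g - \<alpha> - q \<in> M}"
  have "anti_wo P" unfolding P by (rule anti_wo_translate[OF anti_wo_subset[OF a(1)]]) blast
  then have "finite ?Q" using anti_wo_finite_fibres M(1) by blast
  moreover have "\<alpha> \<notin> (\<lambda>q. \<alpha> + q) ` ?Q" unfolding P by auto
  moreover have "{y\<in>supp a. g - y \<in> supp c} \<subseteq> insert \<alpha> ((\<lambda>q. \<alpha> + q) ` ?Q)"
  proof
    fix y assume y: "y \<in> {y\<in>supp a. g - y \<in> supp c}"
    show "y \<in> insert \<alpha> ((\<lambda>q. \<alpha> + q) ` ?Q)"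
    proof (cases "y = \<alpha>")
      case False
      then have "y - \<alpha> \<in> ?Q" using y M(2) unfolding P by (auto simp: algebra_simps)
      then show ?thesis by (auto intro: image_eqI[of _ _ "y - \<alpha>"])
    qed simp
  qed
  ultimately have "convolution c a g = (\<Sum>y\<in>insert \<alpha> ((\<lambda>q. \<alpha> + q) ` ?Q). c (g - y) * a y)"
    by (intro convolution_eq_sum_superset) auto
  also have "\<dots> = c (g - \<alpha>) * a \<alpha> + (\<Sum>q\<in>?Q. a (\<alpha> + q) * c (g - \<alpha> - q))"
    using \<open>finite ?Q\<close> \<open>\<alpha> \<notin> _\<close> by (simp add: sum.reindex inj_on_def algebra_simps)
  finally show ?thesis .
qed

lemma convolution_quotient_supported_in:
  fixes a b :: "'g::linordered_ab_group_add \<Rightarrow> real"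
  assumes a: "anti_wo (supp a)" "\<alpha> \<in> supp a" "\<forall>y\<in>supp a. y \<le> \<alpha>"
    and P: "P = (\<lambda>y. y - \<alpha>) ` (supp a - {\<alpha>})"
    and M: "anti_wo M" "(\<lambda>y. y - \<alpha>) ` supp b \<subseteq> M" "\<And>x q. x \<in> M \<Longrightarrow> q \<in> P \<Longrightarrow> x + q \<in> M"
  shows "\<exists>c. supp c \<subseteq> M \<and> convolution c a = b"
proof -
  have P_neg: "\<forall>p\<in>P. p < 0" unfolding P using a(3) by (auto simp: less_le)
  define Q where "Q h = {q\<in>P. h - q \<in> M}" for h
  define F where "F c h = (b (h + \<alpha>) - (\<Sum>q\<in>Q h. a (\<alpha> + q) * c (h - q))) / a \<alpha>"
    for c :: "'g \<Rightarrow> real" and h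
  have F_cong: "F c h = F c' h" if "\<forall>x\<in>M. h < x \<longrightarrow> c x = c' x" for c c' h
  proof -
    have "(\<Sum>q\<in>Q h. a (\<alpha> + q) * c (h - q)) = (\<Sum>q\<in>Q h. a (\<alpha> + q) * c' (h - q))"
      by (rule sum.cong) (use that P_neg in \<open>auto simp: Q_def\<close>)
    then show ?thesis unfolding F_def by simp
  qed
  obtain c where c: "\<And>h. c h = (if h \<in> M then F c h else 0)"
    using anti_wo_recursion[OF M(1), of F] F_cong by blast
  have c_M: "supp c \<subseteq> M" unfolding supp_def using c by (metis (mono_tags) mem_Collect_eq subsetI)
  have "convolution c a g = b g" for g
  proof (cases "g - \<alpha> \<in> M")
    case True
    then show ?thesis
      using convolution_split_leading[OF a M(1) c_M P] c[of "g - \<alpha>"] a(2)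
      unfolding F_def Q_def supp_def by simp
  next
    case False
    have "b g = 0" using M(2) False unfolding supp_def by (force simp: image_iff)
    moreover have Q_empty: "{q\<in>P. g - \<alpha> - q \<in> M} = {}" using M(3) False by fastforce
    ultimately show ?thesis
      using convolution_split_leading[OF a M(1) c_M P] c[of "g - \<alpha>"] False
      by (simp add: Q_empty)
  qed
  with c_M show ?thesis by blast
qed

text \<open>Division of Hahn series: by Neumann's lemma, with \<open>\<alpha>\<close> the leading exponent of
  \<open>a\<close>, the set \<open>supp b - \<alpha> + \<langle>supp a - \<alpha> - {0}\<rangle>\<close> qualifies as support of the quotient.\<close>
theorem convolution_quotient_exists:
  fixes a b :: "'g::linordered_ab_group_add \<Rightarrow> real"
  assumes H: "0 \<in> H" "\<forall>x\<in>H. \<forall>y\<in>H. x + y \<in> H" "\<forall>x\<in>H. - x \<in> H"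
    and a: "supp a \<subseteq> H" "anti_wo (supp a)" "supp a \<noteq> {}"
    and b: "supp b \<subseteq> H" "anti_wo (supp b)"
  shows "\<exists>c. supp c \<subseteq> H \<and> anti_wo (supp c) \<and> convolution c a = b"
proof -
  obtain \<alpha> where \<alpha>: "\<alpha> \<in> supp a" "\<forall>y\<in>supp a. y \<le> \<alpha>" using anti_wo_has_max[OF a(2) _ a(3)] by blast
  have H_diff: "x - \<alpha> \<in> H" if "x \<in> H" for x
    using H(2,3) \<alpha>(1) a(1) that by (metis diff_conv_add_uminus subsetD)
  define P where "P = (\<lambda>y. y - \<alpha>) ` (supp a - {\<alpha>})"
  define S where "S = (\<lambda>y. y - \<alpha>) ` supp b"
  define M where "M = {s + m | s m. s \<in> S \<and> m \<in> generated_monoid P}"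
  have P_neg: "\<forall>p\<in>P. p < 0" unfolding P_def using \<alpha>(2) by (auto simp: less_le)
  have "anti_wo S" unfolding S_def by (rule anti_wo_translate[OF b(2)])
  moreover have "anti_wo P" unfolding P_def by (rule anti_wo_translate[OF anti_wo_subset[OF a(2)]]) blast
  ultimately have M_awo: "anti_wo M"
    unfolding M_def by (rule anti_wo_sumset[OF _ anti_wo_generated_monoid[OF _ P_neg]])
  have M_add: "x + q \<in> M" if "x \<in> M" "q \<in> P" for x q
  proof -
    obtain s m where "x = s + m" "s \<in> S" "m \<in> generated_monoid P" using \<open>x \<in> M\<close> unfolding M_def by blast
    moreover have "x + q = s + (q + m)" using \<open>x = s + m\<close> by (simp add: algebra_simps)
    ultimately show ?thesis using generated_monoid_add[OF _ \<open>q \<in> P\<close>] unfolding M_def by blast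
  qed
  have S_M: "S \<subseteq> M"
  proof
    fix s assume "s \<in> S"
    then have "s + 0 \<in> M" unfolding M_def using zero_in_generated_monoid by blast
    then show "s \<in> M" by simp
  qed
  have "P \<subseteq> H" "S \<subseteq> H" unfolding P_def S_def using a(1) b(1) H_diff by auto
  then have "M \<subseteq> H"
    unfolding M_def using generated_monoid_subset[OF H(1,2)] H(2) by blast
  moreover obtain c where "supp c \<subseteq> M" "convolution c a = b"
    using convolution_quotient_supported_in[OF a(2) \<alpha> P_def M_awo S_M[unfolded S_def] M_add] by blast
  ultimately show ?thesis using anti_wo_subset[OF M_awo] by blast
qed

section \<open>The ordered group \<open>H(\<Phi>)\<close>\<close>

lemma gsupp_gmul: "gsupp (gmul g h) \<subseteq> gsupp g \<union> gsupp h"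
  unfolding gsupp_def gmul_def by auto

lemma Hgrp_gmul: "g \<in> Hgrp \<Longrightarrow> h \<in> Hgrp \<Longrightarrow> gmul g h \<in> Hgrp"
  unfolding Hgrp_def using anti_wo_subset[OF anti_wo_Un gsupp_gmul] by blast

lemma Hgrp_ginv: "g \<in> Hgrp \<Longrightarrow> ginv g \<in> Hgrp"
  unfolding Hgrp_def ginv_def gsupp_def by simp

lemma Hgrp_gone: "gone \<in> Hgrp"
  unfolding Hgrp_def gone_def gsupp_def anti_wo_def by simp

lemma gsupp_ind: "gsupp (ind p) = {p}"
  unfolding gsupp_def ind_def by auto

lemma Hgrp_ind: "ind p \<in> Hgrp"
  unfolding Hgrp_def by (simp add: gsupp_ind anti_wo_singleton)

lemma ind_neq_gone: "ind p \<noteq> gone"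
  unfolding ind_def gone_def by (auto simp: fun_eq_iff)

lemma gmul_assoc: "gmul (gmul x y) z = gmul x (gmul y z)"
  and gmul_commute: "gmul x y = gmul y x"
  and gmul_gone: "gmul gone x = x" "gmul x gone = x"
  and gmul_ginv: "gmul (ginv x) x = gone" "gmul x (ginv x) = gone"
  and ginv_gone: "ginv gone = gone"
  and ginv_gmul_ginv: "ginv (gmul y (ginv x)) = gmul x (ginv y)"
  unfolding gmul_def ginv_def gone_def by (simp_all add: algebra_simps fun_eq_iff)

lemma LFm_eqI:
  assumes "u p \<noteq> 0" "\<forall>q>p. u q = 0"
  shows "LFm u = p"
  unfolding LFm_def
proof (rule the_equality)
  fix p' assume "u p' \<noteq> 0 \<and> (\<forall>q>p'. u q = 0)"
  with assms show "p' = p" by (cases p' p rule: linorder_cases) auto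
qed (use assms in blast)

lemma LFm_Hgrp:
  assumes "u \<in> Hgrp" "u \<noteq> gone"
  shows "u (LFm u) \<noteq> 0" "\<forall>q>LFm u. u q = 0"
proof -
  have "gsupp u \<noteq> {}" using assms(2) unfolding gsupp_def gone_def by (auto simp: fun_eq_iff)
  with assms(1) obtain p where "p \<in> gsupp u" "\<forall>q\<in>gsupp u. q \<le> p"
    unfolding Hgrp_def using anti_wo_has_max by blast
  then have "u p \<noteq> 0" "\<forall>q>p. u q = 0" unfolding gsupp_def by (auto simp: not_le[symmetric])
  moreover from this have "LFm u = p" by (rule LFm_eqI)
  ultimately show "u (LFm u) \<noteq> 0" "\<forall>q>LFm u. u q = 0" by simp_all
qed

lemma gpos_gmul:
  assumes "gpos u" "gpos v"
  shows "gpos (gmul u v)"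
proof -
  obtain p q where p: "u p > 0" "\<forall>r>p. u r = 0" and q: "v q > 0" "\<forall>r>q. v r = 0"
    using assms unfolding gpos_def by blast
  show ?thesis unfolding gpos_def gmul_def
    using p q by (cases p q rule: linorder_cases) (auto intro!: exI[of _ "max p q"])
qed

lemma not_gpos_ginv: "gpos u \<Longrightarrow> \<not> gpos (ginv u)"
proof
  assume "gpos u" "gpos (ginv u)"
  then obtain p q where "u p > 0" "\<forall>r>p. u r = 0" "u q < 0" "\<forall>r>q. u r = 0"
    unfolding gpos_def ginv_def by auto
  then show False by (cases p q rule: linorder_cases) auto
qed

lemma not_gpos_gone: "\<not> gpos gone"
  unfolding gpos_def gone_def by simp

lemma gpos_or_gpos_ginv:
  assumes "u \<in> Hgrp" "u \<noteq> gone"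
  shows "gpos u \<or> gpos (ginv u)"
proof (cases "u (LFm u) > 0")
  case True
  then show ?thesis using LFm_Hgrp(2)[OF assms] unfolding gpos_def by blast
next
  case False
  then have "ginv u (LFm u) > 0" using LFm_Hgrp(1)[OF assms] by (simp add: ginv_def)
  then show ?thesis using LFm_Hgrp(2)[OF assms] unfolding gpos_def ginv_def by auto
qed

lemma mless_irrefl: "\<not> mless x x"
  unfolding mless_def gmul_ginv using not_gpos_gone by simp

lemma mless_asym: "mless x y \<Longrightarrow> \<not> mless y x"
  unfolding mless_def using not_gpos_ginv ginv_gmul_ginv by metis

lemma mless_trans:
  assumes "mless x y" "mless y z"
  shows "mless x z"
proof -
  have "gmul (gmul z (ginv y)) (gmul y (ginv x)) = gmul z (ginv x)"
    unfolding gmul_def ginv_def by (simp add: fun_eq_iff)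
  then show ?thesis
    using gpos_gmul[OF assms(2)[unfolded mless_def] assms(1)[unfolded mless_def]]
    unfolding mless_def by simp
qed

lemma mless_linear:
  assumes "x \<in> Hgrp" "y \<in> Hgrp" "x \<noteq> y"
  shows "mless x y \<or> mless y x"
proof -
  have "gmul y (ginv x) \<in> Hgrp" using Hgrp_gmul[OF assms(2) Hgrp_ginv[OF assms(1)]] .
  moreover have "gmul y (ginv x) \<noteq> gone"
  proof
    assume "gmul y (ginv x) = gone"
    then have "y = x" unfolding gmul_def ginv_def gone_def by (simp add: fun_eq_iff)
    with assms(3) show False by simp
  qed
  ultimately have "gpos (gmul y (ginv x)) \<or> gpos (ginv (gmul y (ginv x)))"
    by (rule gpos_or_gpos_ginv)
  then show ?thesis unfolding mless_def ginv_gmul_ginv .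
qed

lemma mless_gone_iff_gpos: "mless gone x \<longleftrightarrow> gpos x"
  unfolding mless_def ginv_gone gmul_gone ..

typedef (overloaded) ('p::linorder) hgrp = "Hgrp :: 'p mon set"
  using Hgrp_gone by blast

instantiation hgrp :: (linorder) linordered_ab_group_add
begin

definition "0 = Abs_hgrp gone"
definition "x + y = Abs_hgrp (gmul (Rep_hgrp x) (Rep_hgrp y))"
definition "- x = Abs_hgrp (ginv (Rep_hgrp x))"
definition "x - y = Abs_hgrp (gmul (Rep_hgrp x) (ginv (Rep_hgrp y)))"
definition "x < y \<longleftrightarrow> mless (Rep_hgrp x) (Rep_hgrp y)"
definition "x \<le> y \<longleftrightarrow> x = y \<or> mless (Rep_hgrp x) (Rep_hgrp y)"

lemma Rep_hgrp_plus: "Rep_hgrp (x + y) = gmul (Rep_hgrp x) (Rep_hgrp y)"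
  unfolding plus_hgrp_def using Rep_hgrp Hgrp_gmul Abs_hgrp_inverse by blast

lemma Rep_hgrp_uminus: "Rep_hgrp (- x) = ginv (Rep_hgrp x)"
  unfolding uminus_hgrp_def using Rep_hgrp Hgrp_ginv Abs_hgrp_inverse by blast

instance
proof
  fix a b c :: "'a hgrp"
  show "a + b + c = a + (b + c)" unfolding plus_hgrp_def by (simp add: Rep_hgrp_plus[unfolded plus_hgrp_def] gmul_assoc)
  show "a + b = b + a" unfolding plus_hgrp_def by (simp add: gmul_commute)
  show "0 + a = a" unfolding plus_hgrp_def zero_hgrp_def
    by (simp add: Abs_hgrp_inverse[OF Hgrp_gone] gmul_gone Rep_hgrp_inverse)
  show "- a + a = 0" unfolding plus_hgrp_def Rep_hgrp_uminus zero_hgrp_def by (simp add: gmul_ginv)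
  show "a - b = a + - b" unfolding plus_hgrp_def minus_hgrp_def Rep_hgrp_uminus ..
  show "a < b \<longleftrightarrow> a \<le> b \<and> \<not> b \<le> a" unfolding less_hgrp_def less_eq_hgrp_def
    using mless_asym mless_irrefl by blast
  show "a \<le> a" unfolding less_eq_hgrp_def by simp
  show "a \<le> b \<Longrightarrow> b \<le> c \<Longrightarrow> a \<le> c" unfolding less_eq_hgrp_def using mless_trans by blast
  show "a \<le> b \<Longrightarrow> b \<le> a \<Longrightarrow> a = b" unfolding less_eq_hgrp_def using mless_asym by blast
  show "a \<le> b \<or> b \<le> a" unfolding less_eq_hgrp_def
    using mless_linear[OF Rep_hgrp Rep_hgrp] Rep_hgrp_inject by blast
  have "gmul (gmul (Rep_hgrp c) (Rep_hgrp b)) (ginv (gmul (Rep_hgrp c) (Rep_hgrp a)))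
      = gmul (Rep_hgrp b) (ginv (Rep_hgrp a))"
    unfolding gmul_def ginv_def by (simp add: fun_eq_iff)
  then show "a \<le> b \<Longrightarrow> c + a \<le> c + b" unfolding less_eq_hgrp_def mless_def Rep_hgrp_plus by auto
qed

end

lemma Abs_hgrp_gmul: "x \<in> Hgrp \<Longrightarrow> y \<in> Hgrp \<Longrightarrow> Abs_hgrp (gmul x y) = Abs_hgrp x + Abs_hgrp y"
  by (metis Abs_hgrp_inverse Rep_hgrp_inverse Rep_hgrp_plus)

lemma Abs_hgrp_ginv: "x \<in> Hgrp \<Longrightarrow> Abs_hgrp (ginv x) = - Abs_hgrp x"
  by (metis Abs_hgrp_inverse Rep_hgrp_inverse Rep_hgrp_uminus)

lemma Abs_hgrp_gone: "Abs_hgrp gone = 0"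
  by (simp add: zero_hgrp_def)

lemma Abs_hgrp_inject': "x \<in> Hgrp \<Longrightarrow> y \<in> Hgrp \<Longrightarrow> Abs_hgrp x = Abs_hgrp y \<longleftrightarrow> x = y"
  by (metis Abs_hgrp_inverse)

lemma mless_iff_Abs_hgrp: "x \<in> Hgrp \<Longrightarrow> y \<in> Hgrp \<Longrightarrow> mless x y \<longleftrightarrow> Abs_hgrp x < Abs_hgrp y"
  unfolding less_hgrp_def by (simp add: Abs_hgrp_inverse)

lemma mle_iff_Abs_hgrp: "x \<in> Hgrp \<Longrightarrow> y \<in> Hgrp \<Longrightarrow> mle x y \<longleftrightarrow> Abs_hgrp x \<le> Abs_hgrp y"
  unfolding less_eq_hgrp_def mle_def by (simp add: Abs_hgrp_inverse Abs_hgrp_inject')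

lemma mle_antisym: "x \<in> Hgrp \<Longrightarrow> y \<in> Hgrp \<Longrightarrow> mle x y \<Longrightarrow> mle y x \<Longrightarrow> x = y"
  by (simp add: mle_iff_Abs_hgrp Abs_hgrp_inject')

section \<open>The field \<open>\<real>((\<Gamma>))\<close>\<close>

definition hcoeff :: "('p::linorder) series \<Rightarrow> 'p hgrp \<Rightarrow> real" where
  "hcoeff a = (\<lambda>u. a (Rep_hgrp u))"

definition hahn_series :: "('p::linorder) series \<Rightarrow> bool" where
  "hahn_series a \<longleftrightarrow> Supp a \<subseteq> Hgrp \<and> anti_wo_m (Supp a)"

lemma supp_hcoeff: "Supp a \<subseteq> Hgrp \<Longrightarrow> supp (hcoeff a) = Abs_hgrp ` Supp a"
  unfolding supp_def hcoeff_def Supp_def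
  by (force simp: Abs_hgrp_inverse Rep_hgrp_inverse image_iff intro: exI[of _ "Rep_hgrp u" for u])

lemma anti_wo_m_iff_anti_wo:
  assumes "S \<subseteq> Hgrp"
  shows "anti_wo_m S \<longleftrightarrow> anti_wo (Abs_hgrp ` S)"
proof -
  have "(\<exists>f. \<forall>i. f (Suc i) \<in> S \<and> f i \<in> S \<and> mless (f i) (f (Suc i)))
      \<longleftrightarrow> (\<exists>f. (\<forall>i. f i \<in> Abs_hgrp ` S) \<and> (\<forall>i. f i < f (Suc i)))" (is "?L \<longleftrightarrow> ?R")
  proof
    assume ?L
    then obtain f where "\<forall>i. f i \<in> S \<and> mless (f i) (f (Suc i))" by blast
    then show ?R using assms mless_iff_Abs_hgrp by (intro exI[of _ "\<lambda>i. Abs_hgrp (f i)"]) blast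
  next
    assume ?R
    then obtain f where f: "\<forall>i. f i \<in> Abs_hgrp ` S" "\<forall>i. f i < f (Suc i)" by blast
    have "Rep_hgrp (f i) \<in> S" for i
    proof -
      obtain x where "x \<in> S" "f i = Abs_hgrp x" using f(1) by blast
      with assms show ?thesis by (auto simp: Abs_hgrp_inverse)
    qed
    then show ?L using f(2) unfolding less_hgrp_def by (intro exI[of _ "\<lambda>i. Rep_hgrp (f i)"]) blast
  qed
  then show ?thesis
    unfolding anti_wo_m_def anti_wo_iff_no_increasing_seq wf_iff_no_infinite_down_chain by auto
qed

lemma hahn_series_anti_wo: "hahn_series a \<Longrightarrow> anti_wo (supp (hcoeff a))"
  using anti_wo_m_iff_anti_wo[of "Supp a"] supp_hcoeff[of a] unfolding hahn_series_def by simp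

lemma good_group_subset_Hgrp: "good_group G \<Longrightarrow> G \<subseteq> Hgrp"
  unfolding good_group_def by blast

lemma is_series_hahn_series: "good_group G \<Longrightarrow> is_series G a \<Longrightarrow> hahn_series a"
  unfolding good_group_def is_series_def hahn_series_def by blast

lemma supp_hcoeff_nonempty:
  assumes "Supp a \<subseteq> Hgrp" "a \<noteq> szero"
  shows "supp (hcoeff a) \<noteq> {}"
proof -
  have "Supp a \<noteq> {}" using assms(2) unfolding Supp_def szero_def by (auto simp: fun_eq_iff)
  then show ?thesis using supp_hcoeff[OF assms(1)] by simp
qed

lemma hcoeff_inject:
  assumes "Supp c \<subseteq> Hgrp" "Supp d \<subseteq> Hgrp" "hcoeff c = hcoeff d"
  shows "c = d"
proof
  fix g show "c g = d g"
  proof (cases "g \<in> Hgrp")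
    case True
    then show ?thesis using fun_cong[OF assms(3), of "Abs_hgrp g"] by (simp add: hcoeff_def Abs_hgrp_inverse)
  next
    case False
    then have "c g = 0" "d g = 0" using assms(1,2) unfolding Supp_def by blast+
    then show ?thesis by simp
  qed
qed

lemma stimes_hcoeff:
  assumes "Supp c \<subseteq> Hgrp" "Supp a \<subseteq> Hgrp"
  shows "stimes c a g = (if g \<in> Hgrp then convolution (hcoeff c) (hcoeff a) (Abs_hgrp g) else 0)"
proof (cases "g \<in> Hgrp")
  case True
  let ?A = "{(x, y). c x \<noteq> 0 \<and> a y \<noteq> 0 \<and> gmul x y = g}"
  let ?B = "{(u, v). hcoeff c u \<noteq> 0 \<and> hcoeff a v \<noteq> 0 \<and> u + v = Abs_hgrp g}"
  have "?A = map_prod Rep_hgrp Rep_hgrp ` ?B"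
  proof (intro equalityI subsetI)
    fix p assume "p \<in> ?A"
    then obtain x y where p: "p = (x, y)" "c x \<noteq> 0" "a y \<noteq> 0" "gmul x y = g" by blast
    then have xy: "x \<in> Hgrp" "y \<in> Hgrp" using assms unfolding Supp_def by auto
    with p have "(Abs_hgrp x, Abs_hgrp y) \<in> ?B"
      by (simp add: hcoeff_def Abs_hgrp_inverse Abs_hgrp_gmul[symmetric])
    moreover have "p = map_prod Rep_hgrp Rep_hgrp (Abs_hgrp x, Abs_hgrp y)"
      using p xy by (simp add: Abs_hgrp_inverse)
    ultimately show "p \<in> map_prod Rep_hgrp Rep_hgrp ` ?B" by blast
  next
    fix p assume "p \<in> map_prod Rep_hgrp Rep_hgrp ` ?B"
    with True show "p \<in> ?A" unfolding hcoeff_def by (auto simp: Rep_hgrp_plus[symmetric] Abs_hgrp_inverse)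
  qed
  moreover have "inj_on (map_prod Rep_hgrp Rep_hgrp) ?B"
    by (rule inj_on_subset[OF map_prod_inj_on]) (auto simp: inj_on_def Rep_hgrp_inject)
  ultimately have "stimes c a g = (\<Sum>(u, v)\<in>?B. hcoeff c u * hcoeff a v)"
    unfolding stimes_def by (simp add: sum.reindex comp_def hcoeff_def case_prod_beta)
  then show ?thesis using True unfolding convolution_def by simp
next
  case False
  then have empty: "{(x, y). c x \<noteq> 0 \<and> a y \<noteq> 0 \<and> gmul x y = g} = {}"
    using assms Hgrp_gmul unfolding Supp_def by blast
  with False show ?thesis unfolding stimes_def by (simp only: empty sum.empty if_False)
qed

lemma Abs_hgrp_image_subgroup:
  assumes "good_group G"
  shows "0 \<in> Abs_hgrp ` G" "\<forall>x\<in>Abs_hgrp ` G. \<forall>y\<in>Abs_hgrp ` G. x + y \<in> Abs_hgrp ` G"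
    "\<forall>x\<in>Abs_hgrp ` G. - x \<in> Abs_hgrp ` G"
proof -
  have G: "G \<subseteq> Hgrp" "gone \<in> G" "\<forall>g\<in>G. \<forall>h\<in>G. gmul g h \<in> G" "\<forall>g\<in>G. ginv g \<in> G"
    using assms unfolding good_group_def by blast+
  show "0 \<in> Abs_hgrp ` G" using G(2) Abs_hgrp_gone by force
  show "\<forall>x\<in>Abs_hgrp ` G. \<forall>y\<in>Abs_hgrp ` G. x + y \<in> Abs_hgrp ` G"
    using G(1,3) by (auto simp: Abs_hgrp_gmul[symmetric] subset_iff)
  show "\<forall>x\<in>Abs_hgrp ` G. - x \<in> Abs_hgrp ` G"
    using G(1,4) by (auto simp: Abs_hgrp_ginv[symmetric] subset_iff)
qed

lemma stimes_quotient_exists: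
  assumes G: "good_group G" and a: "is_series G a" "a \<noteq> szero" and b: "is_series G b"
  shows "\<exists>c. is_series G c \<and> stimes c a = b"
proof -
  have GH: "G \<subseteq> Hgrp" using good_group_subset_Hgrp[OF G] .
  have aG: "Supp a \<subseteq> G" and bG: "Supp b \<subseteq> G" using a(1) b unfolding is_series_def by blast+
  then have aH: "Supp a \<subseteq> Hgrp" and bH: "Supp b \<subseteq> Hgrp" using GH by blast+
  obtain c' where c': "supp c' \<subseteq> Abs_hgrp ` G" "anti_wo (supp c')"
      "convolution c' (hcoeff a) = hcoeff b"
    using convolution_quotient_exists[OF Abs_hgrp_image_subgroup[OF G]]
      supp_hcoeff[OF aH] supp_hcoeff[OF bH] aG bG
      hahn_series_anti_wo[OF is_series_hahn_series[OF G a(1)]]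
      hahn_series_anti_wo[OF is_series_hahn_series[OF G b]] supp_hcoeff_nonempty[OF aH a(2)]
    by (metis image_mono)
  define c where "c g = (if g \<in> Hgrp then c' (Abs_hgrp g) else 0)" for g
  have hcoeff_c: "hcoeff c = c'" unfolding hcoeff_def c_def by (simp add: Rep_hgrp Rep_hgrp_inverse)
  have cG: "Supp c \<subseteq> G"
  proof
    fix g assume "g \<in> Supp c"
    then have g: "g \<in> Hgrp" "Abs_hgrp g \<in> supp c'" unfolding Supp_def supp_def c_def
      by (auto split: if_splits)
    then obtain x where "x \<in> G" "Abs_hgrp g = Abs_hgrp x" using c'(1) by blast
    with g(1) GH show "g \<in> G" by (metis Abs_hgrp_inject' subsetD)
  qed
  then have cH: "Supp c \<subseteq> Hgrp" using GH by blast
  have "is_series G c"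
    unfolding is_series_def using cG anti_wo_m_iff_anti_wo[OF cH] supp_hcoeff[OF cH] c'(2) hcoeff_c
    by simp
  moreover have "stimes c a = b"
  proof
    fix g show "stimes c a g = b g"
      using stimes_hcoeff[OF cH aH, of g] c'(3) hcoeff_c bH unfolding Supp_def
      by (auto simp: hcoeff_def Abs_hgrp_inverse)
  qed
  ultimately show ?thesis by blast
qed

lemma stimes_cancel_right:
  assumes G: "good_group G" and a: "is_series G a" "a \<noteq> szero"
    and c: "is_series G c1" "is_series G c2" and eq: "stimes c1 a = stimes c2 a"
  shows "c1 = c2"
proof -
  have ser: "hahn_series a" "hahn_series c1" "hahn_series c2"
    using is_series_hahn_series[OF G] a(1) c by blast+
  then have H: "Supp a \<subseteq> Hgrp" "Supp c1 \<subseteq> Hgrp" "Supp c2 \<subseteq> Hgrp"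
    unfolding hahn_series_def by blast+
  have "convolution (hcoeff c1) (hcoeff a) u = convolution (hcoeff c2) (hcoeff a) u" for u
    using fun_cong[OF eq, of "Rep_hgrp u"] stimes_hcoeff[OF H(2,1)] stimes_hcoeff[OF H(3,1)]
    by (simp add: Rep_hgrp Rep_hgrp_inverse)
  then have "hcoeff c1 = hcoeff c2"
    using convolution_cancel_right[OF hahn_series_anti_wo[OF ser(1)] supp_hcoeff_nonempty[OF H(1) a(2)]
      hahn_series_anti_wo[OF ser(2)] hahn_series_anti_wo[OF ser(3)]] by blast
  then show ?thesis using hcoeff_inject H by blast
qed

lemma sdiv_correct:
  assumes "good_group G" "is_series G a" "a \<noteq> szero" "is_series G b"
  shows "is_series G (sdiv G b a)" "stimes (sdiv G b a) a = b"
proof -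
  obtain c where c: "is_series G c" "stimes c a = b" using stimes_quotient_exists[OF assms] by blast
  have "sdiv G b a = c" unfolding sdiv_def
    using c stimes_cancel_right[OF assms(1-3)] by (intro the_equality) auto
  with c show "is_series G (sdiv G b a)" "stimes (sdiv G b a) a = b" by simp_all
qed

lemma LM_eqI:
  assumes "Supp a \<subseteq> Hgrp" "m \<in> Supp a" "\<forall>h\<in>Supp a. mle h m"
  shows "LM a = m"
  unfolding LM_def using assms mle_antisym by (intro the_equality) blast+

lemma LM_greatest:
  assumes "hahn_series a" "a \<noteq> szero"
  shows "LM a \<in> Supp a" "\<forall>h\<in>Supp a. mle h (LM a)"
proof -
  have aH: "Supp a \<subseteq> Hgrp" using assms(1) unfolding hahn_series_def by blast
  obtain u where u: "u \<in> supp (hcoeff a)" "\<forall>v\<in>supp (hcoeff a). v \<le> u"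
    using anti_wo_has_max[OF hahn_series_anti_wo[OF assms(1)] _ supp_hcoeff_nonempty[OF aH assms(2)]]
    by blast
  then obtain x where x: "x \<in> Supp a" "u = Abs_hgrp x" using supp_hcoeff[OF aH] by blast
  have "\<forall>h\<in>Supp a. mle h x" using u x aH supp_hcoeff[OF aH] mle_iff_Abs_hgrp by blast
  moreover from this have "LM a = x" by (rule LM_eqI[OF aH x(1)])
  ultimately show "LM a \<in> Supp a" "\<forall>h\<in>Supp a. mle h (LM a)" using x(1) by simp_all
qed

lemma LM_in_Hgrp: "hahn_series a \<Longrightarrow> a \<noteq> szero \<Longrightarrow> LM a \<in> Hgrp"
  using LM_greatest(1) unfolding hahn_series_def by blast

lemma coeff_LM_neq_zero: "hahn_series a \<Longrightarrow> a \<noteq> szero \<Longrightarrow> a (LM a) \<noteq> 0"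
  using LM_greatest(1) unfolding Supp_def by blast

lemma coeff_above_LM:
  assumes "hahn_series a" "a \<noteq> szero" "h \<in> Hgrp" "mless (LM a) h"
  shows "a h = 0"
  using LM_greatest(2)[OF assms(1,2)] assms(3,4) LM_in_Hgrp[OF assms(1,2)] mle_antisym mless_asym
  unfolding mle_def Supp_def by blast

lemma stimes_LM:
  assumes "hahn_series c" "hahn_series a" "c \<noteq> szero" "a \<noteq> szero"
  shows "stimes c a (gmul (LM c) (LM a)) = c (LM c) * a (LM a)"
proof -
  have H: "Supp c \<subseteq> Hgrp" "Supp a \<subseteq> Hgrp" using assms(1,2) unfolding hahn_series_def by blast+
  have lead: "Abs_hgrp (LM d) \<in> supp (hcoeff d)" "\<forall>x\<in>supp (hcoeff d). x \<le> Abs_hgrp (LM d)"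
    if "hahn_series d" "d \<noteq> szero" for d
  proof -
    have dH: "Supp d \<subseteq> Hgrp" using that(1) unfolding hahn_series_def by blast
    show "Abs_hgrp (LM d) \<in> supp (hcoeff d)" using LM_greatest(1)[OF that] supp_hcoeff[OF dH] by blast
    show "\<forall>v\<in>supp (hcoeff d). v \<le> Abs_hgrp (LM d)"
    proof
      fix v assume "v \<in> supp (hcoeff d)"
      then obtain h where "h \<in> Supp d" "v = Abs_hgrp h" using supp_hcoeff[OF dH] by blast
      then show "v \<le> Abs_hgrp (LM d)"
        using LM_greatest(2)[OF that] mle_iff_Abs_hgrp dH LM_in_Hgrp[OF that] by blast
    qed
  qed
  have LMH: "LM c \<in> Hgrp" "LM a \<in> Hgrp" using LM_in_Hgrp assms by blast+
  have "stimes c a (gmul (LM c) (LM a))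
      = convolution (hcoeff c) (hcoeff a) (Abs_hgrp (LM c) + Abs_hgrp (LM a))"
    using stimes_hcoeff[OF H] Hgrp_gmul[OF LMH] Abs_hgrp_gmul[OF LMH] by simp
  also have "\<dots> = hcoeff c (Abs_hgrp (LM c)) * hcoeff a (Abs_hgrp (LM a))"
    using convolution_leading lead assms by blast
  finally show ?thesis using LMH by (simp add: hcoeff_def Abs_hgrp_inverse)
qed

lemma stimes_szero: "stimes szero a = szero"
  unfolding stimes_def szero_def by simp

lemma stimes_mono: "stimes (mono \<beta>) s g = s (gmul g (ginv \<beta>))"
proof -
  let ?y = "gmul g (ginv \<beta>)"
  let ?A = "{(x, y). mono \<beta> x \<noteq> 0 \<and> s y \<noteq> 0 \<and> gmul x y = g}"
  have y: "gmul \<beta> y = g \<longleftrightarrow> y = ?y" for y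
    unfolding gmul_def ginv_def by (auto simp: fun_eq_iff algebra_simps)
  have A: "?A \<subseteq> {(\<beta>, ?y)}"
  proof
    fix p assume "p \<in> ?A"
    then obtain x y where "p = (x, y)" "mono \<beta> x \<noteq> 0" "gmul x y = g" by blast
    then show "p \<in> {(\<beta>, ?y)}" using y unfolding mono_def by (simp split: if_splits)
  qed
  show ?thesis
  proof (cases "s ?y = 0")
    case True
    have "?A = {}"
    proof (intro equalityI subsetI)
      fix p assume p: "p \<in> ?A"
      then have "p = (\<beta>, ?y)" using A by blast
      with p True show "p \<in> {}" by simp
    qed simp
    then show ?thesis unfolding stimes_def using True by (simp only: sum.empty)
  next
    case False
    then have "?A = {(\<beta>, ?y)}" using A y unfolding mono_def by auto
    then show ?thesis unfolding stimes_def by (simp add: mono_def)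
  qed
qed

lemma Supp_mono: "Supp (mono g) = {g}"
  unfolding Supp_def mono_def by auto

lemma is_series_mono:
  assumes "g \<in> G"
  shows "is_series G (mono g)"
proof -
  have empty: "{(x, y). x = g \<and> y = g \<and> mless y x} = {}" using mless_irrefl by auto
  with assms show ?thesis unfolding is_series_def Supp_mono anti_wo_m_def by (simp add: empty)
qed

lemma mono_neq_szero: "mono g \<noteq> szero"
  unfolding mono_def szero_def by (auto simp: fun_eq_iff)

lemma LM_mono: "g \<in> Hgrp \<Longrightarrow> LM (mono g) = g"
  by (rule LM_eqI) (auto simp: Supp_mono mle_def)

lemma ind_in_good_group: "good_group G \<Longrightarrow> ind p \<in> G"
  unfolding good_group_def by blast

lemma LFm_ind: "LFm (ind p) = p"
  by (rule LFm_eqI) (auto simp: ind_def)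

lemma gpos_ind: "gpos (ind p)"
  unfolding gpos_def ind_def by auto

lemma mless_ind: "\<psi> < \<phi> \<Longrightarrow> mless (ind \<psi>) (ind \<phi>)"
  unfolding mless_def gpos_def gmul_def ginv_def ind_def by (intro exI[of _ \<phi>]) auto

lemma mabs_gpos: "gpos u \<Longrightarrow> mabs u = u"
  unfolding mabs_def mless_gone_iff_gpos by simp

lemma mabs_ind: "mabs (ind p) = ind p"
  using mabs_gpos gpos_ind by blast

section \<open>Hardy type derivations\<close>

lemma mabs_leading:
  assumes "u \<in> Hgrp" "u \<noteq> gone"
  shows "mabs u (LFm u) = \<bar>u (LFm u)\<bar>" "\<forall>q>LFm u. mabs u q = 0" "mless gone (mabs u)"
proof -
  note L = LFm_Hgrp[OF assms]
  show *: "mabs u (LFm u) = \<bar>u (LFm u)\<bar>" "\<forall>q>LFm u. mabs u q = 0"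
  proof (atomize (full), cases "u (LFm u) > 0")
    case True
    then have "gpos u" using L(2) unfolding gpos_def by blast
    with True L show "mabs u (LFm u) = \<bar>u (LFm u)\<bar> \<and> (\<forall>q>LFm u. mabs u q = 0)"
      by (simp add: mabs_gpos)
  next
    case False
    then have "\<not> gpos u" using L LFm_eqI unfolding gpos_def by (metis less_irrefl)
    with False L show "mabs u (LFm u) = \<bar>u (LFm u)\<bar> \<and> (\<forall>q>LFm u. mabs u q = 0)"
      unfolding mabs_def mless_gone_iff_gpos ginv_def by simp
  qed
  have "mabs u (LFm u) > 0" using * L(1) by simp
  then show "mless gone (mabs u)" unfolding mless_gone_iff_gpos gpos_def using * by blast
qed

lemma scaled_ind_in_good_group:
  assumes "good_group G"
  shows "(\<lambda>x. real n * ind p x) \<in> G"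
proof (induction n)
  case 0
  have "(\<lambda>x. real 0 * ind p x) = gone" unfolding gone_def by simp
  then show ?case using assms unfolding good_group_def by simp
next
  case (Suc n)
  have "(\<lambda>x. real (Suc n) * ind p x) = gmul (\<lambda>x. real n * ind p x) (ind p)"
    unfolding gmul_def by (simp add: algebra_simps)
  then show ?case using Suc assms unfolding good_group_def by simp
qed

locale hardy_derivation =
  fixes G :: "('p::linorder) mon set" and D :: "'p series \<Rightarrow> 'p series"
  assumes good_group: "good_group G" and hardy_type: "hardy_type G D"
begin

abbreviation logder :: "'p series \<Rightarrow> 'p series" where
  "logder b \<equiv> sdiv G (D b) b"

lemma G_subset_Hgrp: "G \<subseteq> Hgrp"
  using good_group_subset_Hgrp[OF good_group] .

lemma series_derivation: "series_derivation G D"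
  and D_eq_szero: "is_series G a \<Longrightarrow> D a = szero \<Longrightarrow> \<exists>c. a = smul c (mono gone)"
  and HD2: "\<lbrakk>is_series G a; is_series G b; a \<noteq> szero; b \<noteq> szero; LM a \<noteq> gone; LM b \<noteq> gone\<rbrakk>
    \<Longrightarrow> mle (LM a) (LM b) \<longleftrightarrow> mle (LM (D a)) (LM (D b))"
  and HD3: "\<lbrakk>is_series G a; is_series G b; a \<noteq> szero; b \<noteq> szero;
    mless (mabs (LM b)) (mabs (LM a)); mless gone (mabs (LM b))\<rbrakk>
    \<Longrightarrow> mle (LM (logder b)) (LM (logder a)) \<and> (LM (logder a) = LM (logder b) \<longleftrightarrow> LF a = LF b)"
  using hardy_type unfolding hardy_type_def by simp_all

lemma is_series_D: "is_series G a \<Longrightarrow> is_series G (D a)"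
  using conjunct1[OF series_derivation[unfolded series_derivation_def]] by blast

lemma D_one: "D (mono gone) = szero"
  and D_mono: "\<alpha> \<in> G \<Longrightarrow>
    D (mono \<alpha>) = stimes (mono \<alpha>) (fsum (gsupp \<alpha>) (\<lambda>p. smul (\<alpha> p) (logder (mono (ind p)))))"
  and D_sum: "is_series G a \<Longrightarrow> D a = fsum (Supp a) (\<lambda>\<beta>. smul (a \<beta>) (D (mono \<beta>)))"
  using series_derivation unfolding series_derivation_def Let_def by simp_all

lemma logder_correct:
  assumes "is_series G b" "b \<noteq> szero"
  shows "is_series G (logder b)" "stimes (logder b) b = D b"
  using sdiv_correct[OF good_group assms is_series_D[OF assms(1)]] by simp_all

lemma logder_neq_szero:
  assumes "is_series G b" "b \<noteq> szero" "LM b \<noteq> gone"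
  shows "logder b \<noteq> szero"
proof
  assume "logder b = szero"
  then have "D b = szero" using logder_correct(2)[OF assms(1,2)] stimes_szero by metis
  then obtain c where "b = smul c (mono gone)" using D_eq_szero[OF assms(1)] by blast
  then have "Supp b \<subseteq> {gone}" unfolding Supp_def smul_def mono_def by auto
  moreover have "LM b \<in> Supp b"
    using LM_greatest(1)[OF is_series_hahn_series[OF good_group assms(1)] assms(2)] .
  ultimately show False using assms(3) by blast
qed

lemma is_series_ind: "is_series G (mono (ind p))"
  using is_series_mono[OF ind_in_good_group[OF good_group]] .

lemma LM_ind: "LM (mono (ind p)) = ind p"
  using LM_mono Hgrp_ind by blast

lemma LF_ind: "LF (mono (ind p)) = p"
  unfolding LF_def LM_ind LFm_ind ..

lemma logder_ind:
  "is_series G (logder (mono (ind p)))" "logder (mono (ind p)) \<noteq> szero"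
  "hahn_series (logder (mono (ind p)))" "LM (logder (mono (ind p))) = theta G D p"
  using logder_correct[OF is_series_ind mono_neq_szero] logder_neq_szero[OF is_series_ind mono_neq_szero]
    is_series_hahn_series[OF good_group]
  by (simp_all add: LM_ind ind_neq_gone theta_def)

lemma theta_in_Hgrp: "theta G D p \<in> Hgrp"
  using LM_in_Hgrp logder_ind by metis

lemma theta_strict_mono:
  assumes "\<psi> < \<phi>"
  shows "mless (theta G D \<psi>) (theta G D \<phi>)"
proof -
  have "mle (theta G D \<psi>) (theta G D \<phi>) \<and> (theta G D \<phi> = theta G D \<psi> \<longleftrightarrow> \<phi> = \<psi>)"
    using HD3[OF is_series_ind is_series_ind mono_neq_szero mono_neq_szero]
    by (simp add: LM_ind mabs_ind mless_ind[OF assms] mless_gone_iff_gpos gpos_ind LF_ind theta_def)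
  with assms show ?thesis unfolding mle_def by auto
qed

text \<open>Both \<open>b\<close> and \<open>\<phi>\<close> are comparable to a monomial \<open>\<phi>\<^sup>n\<close> that dominates them
  in absolute value, so by (HD3) all three have logarithmic derivatives with the
  same leading monomial.\<close>
lemma LM_logder:
  assumes b: "is_series G b" "b \<noteq> szero" "LM b \<noteq> gone"
  shows "LM (logder b) = theta G D (LF b)"
proof -
  define \<phi> where "\<phi> = LF b"
  have \<beta>: "LM b \<in> Hgrp"
    using LM_in_Hgrp[OF is_series_hahn_series[OF good_group b(1)] b(2)] .
  note abs_b = mabs_leading[OF \<beta> b(3), folded LF_def \<phi>_def]
  define n :: nat where "n = nat \<lceil>\<bar>LM b \<phi>\<bar>\<rceil> + 2"
  have n: "real n > \<bar>LM b \<phi>\<bar>" "real n > 1" unfolding n_def by linarith+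
  define w where "w = (\<lambda>x. real n * ind \<phi> x)"
  have w: "w \<in> G" unfolding w_def by (rule scaled_ind_in_good_group[OF good_group])
  have LM_w: "LM (mono w) = w" using LM_mono w G_subset_Hgrp by blast
  have "gpos w" unfolding gpos_def w_def using n by (intro exI[of _ \<phi>]) (auto simp: ind_def)
  then have abs_w: "mabs w = w" by (rule mabs_gpos)
  have LF_w: "LF (mono w) = \<phi>"
    unfolding LF_def LM_w by (rule LFm_eqI) (use n in \<open>auto simp: w_def ind_def\<close>)
  have "mless (mabs (LM b)) (mabs (LM (mono w)))"
    unfolding LM_w abs_w mless_def gpos_def using abs_b n
    by (intro exI[of _ \<phi>]) (auto simp: gmul_def ginv_def w_def ind_def)
  then have "LM (logder (mono w)) = LM (logder b)"
    using HD3[OF is_series_mono[OF w] b(1) mono_neq_szero b(2)] abs_b(3) LF_w \<phi>_def by simp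
  moreover have "mless (mabs (LM (mono (ind \<phi>)))) (mabs (LM (mono w)))"
    unfolding LM_w abs_w LM_ind mabs_ind mless_def gpos_def using n
    by (intro exI[of _ \<phi>]) (auto simp: gmul_def ginv_def w_def ind_def)
  then have "LM (logder (mono w)) = theta G D \<phi>"
    using HD3[OF is_series_mono[OF w] is_series_ind mono_neq_szero mono_neq_szero] LF_w
    by (simp add: LM_ind LF_ind mabs_ind mless_gone_iff_gpos gpos_ind theta_def)
  ultimately show ?thesis unfolding \<phi>_def by simp
qed


lemma coeff_logder_ind_above_theta:
  "h \<in> Hgrp \<Longrightarrow> mless (theta G D \<psi>) h \<Longrightarrow> logder (mono (ind \<psi>)) h = 0"
  using coeff_above_LM[OF logder_ind(3) logder_ind(2)] logder_ind(4) by simp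

text \<open>Among the fundamental monomials in the support of \<open>\<alpha>\<close>, the leading one \<open>\<phi>\<close>
  has the largest \<open>\<theta>\<close>, so it alone determines the series \<open>\<Sum>\<^sub>\<psi> \<alpha>\<^sub>\<psi> \<psi>'/\<psi>\<close>
  at and above \<open>\<theta>(\<phi>)\<close>.\<close>
lemma fsum_logder_leading:
  assumes \<alpha>: "\<alpha> \<in> Hgrp" "\<alpha> \<noteq> gone"
  defines "s \<equiv> fsum (gsupp \<alpha>) (\<lambda>p. smul (\<alpha> p) (logder (mono (ind p))))"
    and "\<theta> \<equiv> theta G D (LFm \<alpha>)"
  shows "s \<theta> = \<alpha> (LFm \<alpha>) * LC (logder (mono (ind (LFm \<alpha>))))"
    and "\<And>h. h \<in> Hgrp \<Longrightarrow> mless \<theta> h \<Longrightarrow> s h = 0"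
proof -
  let ?\<phi> = "LFm \<alpha>"
  note L = LFm_Hgrp[OF \<alpha>]
  have below: "\<psi> \<le> ?\<phi>" if "\<psi> \<in> gsupp \<alpha>" for \<psi>
    using that L(2) unfolding gsupp_def by (meson mem_Collect_eq not_le)
  have theta_le: "mle (theta G D \<psi>) \<theta>" if "\<psi> \<in> gsupp \<alpha>" for \<psi>
    using below[OF that] theta_strict_mono unfolding \<theta>_def mle_def by (auto simp: le_less)
  have \<theta>: "\<theta> \<in> Hgrp" unfolding \<theta>_def by (rule theta_in_Hgrp)
  have "{\<psi> \<in> gsupp \<alpha>. smul (\<alpha> \<psi>) (logder (mono (ind \<psi>))) \<theta> \<noteq> 0} = {?\<phi>}"
  proof (intro equalityI subsetI)
    fix \<psi> assume \<psi>: "\<psi> \<in> {\<psi> \<in> gsupp \<alpha>. smul (\<alpha> \<psi>) (logder (mono (ind \<psi>))) \<theta> \<noteq> 0}"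
    show "\<psi> \<in> {?\<phi>}"
    proof (rule ccontr)
      assume "\<psi> \<notin> {?\<phi>}"
      then have "mless (theta G D \<psi>) \<theta>" using below \<psi> theta_strict_mono \<theta>_def by (auto simp: le_less)
      then have "logder (mono (ind \<psi>)) \<theta> = 0" by (rule coeff_logder_ind_above_theta[OF \<theta>])
      with \<psi> show False unfolding smul_def by simp
    qed
  next
    fix \<psi> assume "\<psi> \<in> {?\<phi>}"
    then show "\<psi> \<in> {\<psi> \<in> gsupp \<alpha>. smul (\<alpha> \<psi>) (logder (mono (ind \<psi>))) \<theta> \<noteq> 0}"
      using L(1) coeff_LM_neq_zero[OF logder_ind(3) logder_ind(2)] logder_ind(4)
      unfolding gsupp_def smul_def \<theta>_def by simp
  qed
  then show "s \<theta> = \<alpha> ?\<phi> * LC (logder (mono (ind ?\<phi>)))"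
    unfolding s_def fsum_def LC_def using logder_ind(4) by (simp add: smul_def \<theta>_def)
  fix h assume h: "h \<in> Hgrp" "mless \<theta> h"
  have "logder (mono (ind \<psi>)) h = 0" if "\<psi> \<in> gsupp \<alpha>" for \<psi>
    using theta_le[OF that] h mless_trans coeff_logder_ind_above_theta unfolding mle_def by metis
  then have "{\<psi> \<in> gsupp \<alpha>. smul (\<alpha> \<psi>) (logder (mono (ind \<psi>))) h \<noteq> 0} = {}"
    unfolding smul_def by auto
  then show "s h = 0" unfolding s_def fsum_def by (simp only: sum.empty)
qed

lemma D_mono_leading:
  assumes \<alpha>: "\<alpha> \<in> G" "\<alpha> \<noteq> gone"
  shows "LM (D (mono \<alpha>)) = gmul \<alpha> (theta G D (LFm \<alpha>))"
    and "D (mono \<alpha>) (gmul \<alpha> (theta G D (LFm \<alpha>))) = \<alpha> (LFm \<alpha>) * LC (logder (mono (ind (LFm \<alpha>))))"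
proof -
  let ?\<theta> = "theta G D (LFm \<alpha>)" and ?\<Lambda> = "gmul \<alpha> (theta G D (LFm \<alpha>))"
  have \<alpha>H: "\<alpha> \<in> Hgrp" using \<alpha>(1) G_subset_Hgrp by blast
  note lead = fsum_logder_leading[OF \<alpha>H \<alpha>(2)]
  have D\<alpha>: "D (mono \<alpha>) g = fsum (gsupp \<alpha>) (\<lambda>p. smul (\<alpha> p) (logder (mono (ind p)))) (gmul g (ginv \<alpha>))"
    for g using D_mono[OF \<alpha>(1)] stimes_mono by simp
  have shift: "gmul (gmul \<alpha> \<theta>) (ginv \<alpha>) = \<theta>" for \<theta>
    unfolding gmul_def ginv_def by (simp add: fun_eq_iff)
  show coeff_\<Lambda>: "D (mono \<alpha>) ?\<Lambda> = \<alpha> (LFm \<alpha>) * LC (logder (mono (ind (LFm \<alpha>))))"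
    using D\<alpha> lead(1) shift by simp
  have ser: "hahn_series (D (mono \<alpha>))"
    using is_series_hahn_series[OF good_group is_series_D[OF is_series_mono[OF \<alpha>(1)]]] .
  have \<Lambda>H: "?\<Lambda> \<in> Hgrp" using Hgrp_gmul[OF \<alpha>H theta_in_Hgrp] .
  show "LM (D (mono \<alpha>)) = ?\<Lambda>"
  proof (rule LM_eqI)
    show "Supp (D (mono \<alpha>)) \<subseteq> Hgrp" using ser unfolding hahn_series_def by blast
    show "?\<Lambda> \<in> Supp (D (mono \<alpha>))"
      using coeff_\<Lambda> LFm_Hgrp(1)[OF \<alpha>H \<alpha>(2)] coeff_LM_neq_zero[OF logder_ind(3) logder_ind(2)]
      unfolding Supp_def LC_def by simp
    show "\<forall>h\<in>Supp (D (mono \<alpha>)). mle h ?\<Lambda>"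
    proof
      fix h assume h: "h \<in> Supp (D (mono \<alpha>))"
      then have hH: "h \<in> Hgrp" using ser unfolding hahn_series_def by blast
      have "\<not> mless ?\<theta> (gmul h (ginv \<alpha>))"
        using h lead(2)[OF Hgrp_gmul[OF hH Hgrp_ginv[OF \<alpha>H]]] D\<alpha> unfolding Supp_def by auto
      then have "Abs_hgrp h - Abs_hgrp \<alpha> \<le> Abs_hgrp ?\<theta>"
        using mless_iff_Abs_hgrp[OF theta_in_Hgrp Hgrp_gmul[OF hH Hgrp_ginv[OF \<alpha>H]]]
        by (simp add: Abs_hgrp_gmul[OF hH Hgrp_ginv[OF \<alpha>H]] Abs_hgrp_ginv[OF \<alpha>H])
      then show "mle h ?\<Lambda>"
        using mle_iff_Abs_hgrp[OF hH \<Lambda>H] Abs_hgrp_gmul[OF \<alpha>H theta_in_Hgrp] by (simp add: algebra_simps)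
    qed
  qed
qed


lemma D_mono_vanishes_at_leading:
  assumes "\<alpha> \<in> G" "\<alpha> \<noteq> gone" "\<beta> \<in> G" "mless \<beta> \<alpha>"
  shows "D (mono \<beta>) (LM (D (mono \<alpha>))) = 0"
proof (cases "\<beta> = gone \<or> D (mono \<beta>) = szero")
  case True
  then show ?thesis using D_one unfolding szero_def by auto
next
  case False
  have H: "\<alpha> \<in> Hgrp" "\<beta> \<in> Hgrp" using assms(1,3) G_subset_Hgrp by blast+
  have "\<not> mle \<alpha> \<beta>" using assms(4) mless_asym mless_irrefl unfolding mle_def by blast
  then have "\<not> mle (LM (D (mono \<alpha>))) (LM (D (mono \<beta>)))"
    using HD2[OF is_series_mono[OF assms(1)] is_series_mono[OF assms(3)] mono_neq_szero mono_neq_szero]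
      assms(2) False by (simp add: LM_mono H)
  then show ?thesis
    using LM_greatest(2)[OF is_series_hahn_series[OF good_group is_series_D[OF is_series_mono[OF assms(3)]]]]
      False unfolding Supp_def by blast
qed

text \<open>Only the leading term of \<open>a\<close> contributes to \<open>a'\<close> at the leading monomial of
  \<open>LM(a)'\<close>, since by (HD2) the derivatives of the smaller monomials lie strictly below.\<close>
lemma D_at_leading:
  assumes a: "is_series G a" "a \<noteq> szero" "LM a \<noteq> gone"
  defines "\<Lambda> \<equiv> LM (D (mono (LM a)))"
  shows "D a \<Lambda> = a (LM a) * D (mono (LM a)) \<Lambda>"
proof -
  have ser: "hahn_series a" using is_series_hahn_series[OF good_group a(1)] .
  have aG: "Supp a \<subseteq> G" using a(1) unfolding is_series_def by blast
  have \<alpha>G: "LM a \<in> G" using LM_greatest(1)[OF ser a(2)] aG by blast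
  have "{\<beta> \<in> Supp a. smul (a \<beta>) (D (mono \<beta>)) \<Lambda> \<noteq> 0} \<subseteq> {LM a}"
  proof
    fix \<beta> assume \<beta>: "\<beta> \<in> {\<beta> \<in> Supp a. smul (a \<beta>) (D (mono \<beta>)) \<Lambda> \<noteq> 0}"
    show "\<beta> \<in> {LM a}"
    proof (rule ccontr)
      assume "\<beta> \<notin> {LM a}"
      with \<beta> LM_greatest(2)[OF ser a(2)] have "mless \<beta> (LM a)" unfolding mle_def by auto
      then have "D (mono \<beta>) \<Lambda> = 0"
        unfolding \<Lambda>_def using D_mono_vanishes_at_leading[OF \<alpha>G a(3)] \<beta> aG by blast
      with \<beta> show False unfolding smul_def by simp
    qed
  qed
  then have "{\<beta> \<in> Supp a. smul (a \<beta>) (D (mono \<beta>)) \<Lambda> \<noteq> 0}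
      = (if a (LM a) * D (mono (LM a)) \<Lambda> = 0 then {} else {LM a})"
    using LM_greatest(1)[OF ser a(2)] unfolding smul_def by auto
  then show ?thesis unfolding D_sum[OF a(1)] fsum_def by (simp add: smul_def)
qed

lemma LC_logder:
  assumes a: "is_series G a" "a \<noteq> szero" "LM a \<noteq> gone"
  shows "LC (logder a) = LE a * LC (logder (mono (ind (LF a))))"
proof -
  have ser: "hahn_series a" using is_series_hahn_series[OF good_group a(1)] .
  have \<alpha>G: "LM a \<in> G" using LM_greatest(1)[OF ser a(2)] a(1) unfolding is_series_def by blast
  let ?\<theta> = "theta G D (LF a)"
  have LM_q: "LM (logder a) = ?\<theta>" by (rule LM_logder[OF a])
  have "D a (gmul ?\<theta> (LM a)) = logder a ?\<theta> * a (LM a)"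
    using stimes_LM[OF is_series_hahn_series[OF good_group logder_correct(1)[OF a(1,2)]] ser
        logder_neq_szero[OF a] a(2)] logder_correct(2)[OF a(1,2)] LM_q by simp
  moreover have "D a (gmul ?\<theta> (LM a)) = a (LM a) * (LE a * LC (logder (mono (ind (LF a)))))"
    using D_at_leading[OF a] D_mono_leading[OF \<alpha>G a(3)]
    by (simp add: gmul_commute LF_def LE_def LEm_def)
  ultimately show ?thesis
    using coeff_LM_neq_zero[OF ser a(2)] LM_q unfolding LC_def by simp
qed

lemma range_theta_eq_LM_logder:
  "range (theta G D) = {LM (logder b) | b. is_series G b \<and> b \<noteq> szero \<and> LM b \<noteq> gone}"
proof (intro equalityI subsetI)
  fix t assume "t \<in> range (theta G D)"
  then obtain p where "t = theta G D p" by blast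
  then have "t = LM (logder (mono (ind p)))" using logder_ind(4) by simp
  moreover have "LM (mono (ind p)) \<noteq> gone" by (simp add: LM_ind ind_neq_gone)
  ultimately show "t \<in> {LM (logder b) | b. is_series G b \<and> b \<noteq> szero \<and> LM b \<noteq> gone}"
    using is_series_ind mono_neq_szero by blast
next
  fix t assume "t \<in> {LM (logder b) | b. is_series G b \<and> b \<noteq> szero \<and> LM b \<noteq> gone}"
  then obtain b where "t = LM (logder b)" "is_series G b" "b \<noteq> szero" "LM b \<noteq> gone" by blast
  then show "t \<in> range (theta G D)" using LM_logder by simp
qed

end

theorem mainTheorem3:
  fixes G :: "('p::linorder) mon set" and D :: "'p series \<Rightarrow> 'p series" and a :: "'p series"
  assumes "good_group G" and "hardy_type G D"
    and "is_series G a" and "a \<noteq> szero" and "LM a \<noteq> gone"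
  shows "LT (sdiv G (D a) a) = smul (LE a) (LT (sdiv G (D (mono (ind (LF a)))) (mono (ind (LF a)))))
    \<and> LM (sdiv G (D a) a) = theta G D (LF a)
    \<and> LC (sdiv G (D a) a) = LE a * LC (sdiv G (D (mono (ind (LF a)))) (mono (ind (LF a))))
    \<and> (\<forall>g. is_glb G (range (theta G D)) g \<longleftrightarrow>
           is_glb G {LM (sdiv G (D b) b) | b. is_series G b \<and> b \<noteq> szero \<and> LM b \<noteq> gone} g)"
proof -
  interpret hardy_derivation G D using assms(1,2) by unfold_locales
  have LM: "LM (sdiv G (D a) a) = theta G D (LF a)" by (rule LM_logder[OF assms(3-5)])
  have LC: "LC (sdiv G (D a) a) = LE a * LC (sdiv G (D (mono (ind (LF a)))) (mono (ind (LF a))))"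
    by (rule LC_logder[OF assms(3-5)])
  have "LT (sdiv G (D a) a) = smul (LE a) (LT (sdiv G (D (mono (ind (LF a)))) (mono (ind (LF a)))))"
    unfolding LT_def LM LC logder_ind(4) by (simp add: smul_def fun_eq_iff)
  with LM LC range_theta_eq_LM_logder show ?thesis by simp
qed

end
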